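(* Let $\omega\colon\mathbf Z_+\to(0,+\infty)$ be a weight which is bounded from below, such that $\sum_{n\ge0}1/\omega(k2^n)<+\infty$ for every $k\ge3$, and such that $\mathcal T$ is bounded on $\mathcal X_\omega$. Then $\mathcal T$ is frequently hypercyclic on $\mathcal X_\omega$: there exists $f\in\mathcal X_\omega$ such that for every nonempty open set $U\subset\mathcal X_\omega$, $\liminf_{N\to\infty}\frac{\#\{0\le n\le N:\ \mathcal T^nf\in U\}}{N+1}>0$. In particular this holds for $\omega=\omega_0$, $\omega_0(n)=(n+1)/\pi$.
   Context: $T\colon\mathbf Z_+\to\mathbf Z_+$ is the modified Collatz map: $T(n)=n/2$ for $n$ even, $T(n)=(3n+1)/2$ for $n$ odd. $\mathcal X_\omega$ is the Hilbert space of holomorphic functions $f(z)=\sum_{n\ge3}c_nz^n$ on the unit disk with $\|f\|_\omega^2=\sum_{n\ge3}|c_n|^2/\omega(n)<\infty$. $\mathcal T\sum_{n\ge3}c_nz^n=\sum_{j\ge3,\,T(j)\ge3}c_jz^{T(j)}$. $\mathcal T$ is bounded on $\mathcal X_\omega$ iff the sequences $\omega(6m)/\omega(3m)$, $\omega(6m+2)/\omega(3m+1)$, $(\omega(6m+4)+\omega(2m+1))/\omega(3m+2)$ ($m\ge1$) are bounded; this holds for $\omega_0$. *)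

theory Defs
  imports "HOL-Complex_Analysis.Complex_Analysis"
begin

definition collatz :: "nat \<Rightarrow> nat" where
  "collatz n = (if even n then n div 2 else (3 * n + 1) div 2)"

definition coef :: "(complex \<Rightarrow> complex) \<Rightarrow> nat \<Rightarrow> complex" where
  "coef f n = (deriv ^^ n) f 0 / of_nat (fact n)"

definition inX :: "(nat \<Rightarrow> real) \<Rightarrow> (complex \<Rightarrow> complex) \<Rightarrow> bool" where
  "inX \<omega> f \<longleftrightarrow> f holomorphic_on ball 0 1 \<and> (\<forall>n<3. coef f n = 0) \<and>
      summable (\<lambda>n. (cmod (coef f n))\<^sup>2 / \<omega> n)"

definition normX :: "(nat \<Rightarrow> real) \<Rightarrow> (complex \<Rightarrow> complex) \<Rightarrow> real" where
  "normX \<omega> f = sqrt (\<Sum>n. (cmod (coef f n))\<^sup>2 / \<omega> n)"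

definition openX :: "(nat \<Rightarrow> real) \<Rightarrow> (complex \<Rightarrow> complex) set \<Rightarrow> bool" where
  "openX \<omega> U \<longleftrightarrow> (\<forall>u\<in>U. inX \<omega> u) \<and>
     (\<forall>u\<in>U. \<exists>e>0. \<forall>g. inX \<omega> g \<and> normX \<omega> (\<lambda>z. g z - u z) < e \<longrightarrow> g \<in> U)"

text \<open>Coefficients of the image under the Collatz operator:
  (T f) = sum_{j>=3, T(j)>=3} c_j z^{T(j)}.\<close>
definition Tcoef :: "(nat \<Rightarrow> complex) \<Rightarrow> nat \<Rightarrow> complex" where
  "Tcoef c m = (if m < 3 then 0 else (\<Sum>j\<in>{j. 3 \<le> j \<and> collatz j = m}. c j))"

definition Top :: "(complex \<Rightarrow> complex) \<Rightarrow> (complex \<Rightarrow> complex)" where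
  "Top f = (\<lambda>z. \<Sum>m. Tcoef (coef f) m * z ^ m)"

definition Top_bounded :: "(nat \<Rightarrow> real) \<Rightarrow> bool" where
  "Top_bounded \<omega> \<longleftrightarrow> (\<exists>C. \<forall>f. inX \<omega> f \<longrightarrow> inX \<omega> (Top f) \<and> normX \<omega> (Top f) \<le> C * normX \<omega> f)"

definition freq_hypercyclic :: "(nat \<Rightarrow> real) \<Rightarrow> bool" where
  "freq_hypercyclic \<omega> \<longleftrightarrow> (\<exists>f. inX \<omega> f \<and>
     (\<forall>U. openX \<omega> U \<and> U \<noteq> {} \<longrightarrow>
        Liminf sequentially (\<lambda>N. ereal (real (card {n. n \<le> N \<and> (Top ^^ n) f \<in> U}) / real (N + 1))) > 0))"

definition \<omega>0 :: "nat \<Rightarrow> real" where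
  "\<omega>0 n = (real n + 1) / pi"

end

theory Submission
  imports Defs "HOL-Library.Countable" "HOL-Real_Asymp.Real_Asymp"
begin

text \<open>On coefficient sequences the operator is a backward shift along the Collatz graph: the
  coefficient at \<open>m\<close> of the image collects the coefficients at the preimages \<open>2m\<close> and
  \<open>(2m - 1)/3\<close>. The dilation \<open>c \<mapsto> c(\<cdot> / 2\<^sup>n)\<close> is a right inverse of the \<open>n\<close>-th power on
  sequences vanishing below \<open>3\<close>, and the summability of \<open>1/\<omega>(k 2\<^sup>n)\<close> makes the dilations of a
  fixed finitely supported vector small in norm. Vectors killed by a power of the operator are
  dense: the unit vector at \<open>k\<close> is killed when the orbit of \<open>k\<close> drops below \<open>3\<close>, and otherwise
  it is approximated by killed vectors obtained by subtracting averages of unit vectors at the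
  points \<open>2\<^sup>p T\<^sup>p(k)\<close>, \<open>p\<close> an odd time of the orbit. Listing a countable dense family of killed
  vectors as targets \<open>z\<^sub>l\<close> and choosing pairwise far apart sets \<open>A\<^sub>l\<close> of positive lower density,
  the vector \<open>f = \<Sum>\<^sub>l \<Sum>\<^sub>n\<^sub>\<in>\<^sub>A\<^sub>l dilate n z\<^sub>l\<close> satisfies \<open>T\<^sup>m f \<approx> z\<^sub>l\<close> for every \<open>m \<in> A\<^sub>l\<close>: the
  earlier terms are killed by then and the later ones are dilated far enough to be negligible.\<close>

section \<open>Iterates of the coefficient operator\<close>

definition collatz_pre :: "nat \<Rightarrow> nat set" where
  "collatz_pre m = {j. 3 \<le> j \<and> collatz j = m}"

lemma collatz_pre_subset: "collatz_pre m \<subseteq> {2 * m, (2 * m - 1) div 3}"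
proof
  fix j assume "j \<in> collatz_pre m"
  hence j: "3 \<le> j" "collatz j = m" by (auto simp: collatz_pre_def)
  show "j \<in> {2 * m, (2 * m - 1) div 3}"
  proof (cases "even j")
    case True thus ?thesis using j by (auto simp: collatz_def)
  next
    case False
    hence "3 * j + 1 = 2 * m" using j by (auto simp: collatz_def)
    thus ?thesis by auto
  qed
qed

lemma finite_collatz_pre [simp]: "finite (collatz_pre m)"
  using collatz_pre_subset finite_subset by blast

lemma collatz_pre_le: "j \<in> collatz_pre m \<Longrightarrow> j \<le> 2 * m"
  using collatz_pre_subset by fastforce

lemma double_in_collatz_pre: "3 \<le> m \<Longrightarrow> 2 * m \<in> collatz_pre m"
  by (auto simp: collatz_pre_def collatz_def)

lemma collatz_pre_disjoint: "m \<noteq> m' \<Longrightarrow> collatz_pre m \<inter> collatz_pre m' = {}"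
  by (auto simp: collatz_pre_def)

lemma card_collatz_pre_le: "card (collatz_pre m) \<le> 2"
proof -
  have "card (collatz_pre m) \<le> card {2 * m, (2 * m - 1) div 3}"
    by (rule card_mono[OF _ collatz_pre_subset]) simp
  also have "\<dots> \<le> 2" by (simp add: card_insert_if)
  finally show ?thesis .
qed

lemma Tcoef_eq_sum: "Tcoef c m = (if m < 3 then 0 else sum c (collatz_pre m))"
  by (simp add: Tcoef_def collatz_pre_def)

lemma norm_Tcoef_le: "cmod (Tcoef c m) \<le> cmod (c (2 * m)) + cmod (c ((2 * m - 1) div 3))"
proof (cases "m < 3")
  case True thus ?thesis by (simp add: Tcoef_eq_sum)
next
  case False
  have "cmod (Tcoef c m) \<le> (\<Sum>j\<in>collatz_pre m. cmod (c j))"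
    by (simp add: Tcoef_eq_sum False norm_sum)
  also have "\<dots> \<le> (\<Sum>j\<in>{2 * m, (2 * m - 1) div 3}. cmod (c j))"
    by (rule sum_mono2) (use collatz_pre_subset in auto)
  also have "\<dots> = cmod (c (2 * m)) + cmod (c ((2 * m - 1) div 3))"
    using False by simp
  finally show ?thesis .
qed

fun collatz_pre_pow :: "nat \<Rightarrow> nat \<Rightarrow> nat set" where
  "collatz_pre_pow 0 m = {m}"
| "collatz_pre_pow (Suc p) m = (if m < 3 then {} else \<Union>j\<in>collatz_pre m. collatz_pre_pow p j)"

lemma finite_collatz_pre_pow [simp]: "finite (collatz_pre_pow p m)"
  by (induction p arbitrary: m) auto

lemma collatz_pow_of_pre_pow: "i \<in> collatz_pre_pow p m \<Longrightarrow> (collatz ^^ p) i = m"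
  by (induction p arbitrary: m) (auto simp: collatz_pre_def split: if_splits)

lemma collatz_pre_pow_le: "i \<in> collatz_pre_pow p m \<Longrightarrow> i \<le> 2 ^ p * m"
proof (induction p arbitrary: m)
  case 0 thus ?case by simp
next
  case (Suc p)
  then obtain j where j: "j \<in> collatz_pre m" "i \<in> collatz_pre_pow p j" by (auto split: if_splits)
  have "i \<le> 2 ^ p * j" using Suc.IH j by blast
  also have "\<dots> \<le> 2 ^ p * (2 * m)" using collatz_pre_le[OF j(1)] by simp
  finally show ?case by simp
qed

lemma Tcoef_pow_eq_sum: "(Tcoef ^^ p) c m = (\<Sum>i\<in>collatz_pre_pow p m. c i)"
proof (induction p arbitrary: m)
  case 0 thus ?case by simp
next
  case (Suc p)
  show ?case
  proof (cases "m < 3")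
    case True thus ?thesis by (simp add: Tcoef_eq_sum)
  next
    case False
    have "(Tcoef ^^ Suc p) c m = (\<Sum>j\<in>collatz_pre m. (Tcoef ^^ p) c j)"
      using False by (simp add: Tcoef_eq_sum)
    also have "\<dots> = (\<Sum>j\<in>collatz_pre m. \<Sum>i\<in>collatz_pre_pow p j. c i)"
      using Suc.IH by simp
    also have "\<dots> = sum c (\<Union>j\<in>collatz_pre m. collatz_pre_pow p j)"
      by (rule sum.UNION_disjoint[symmetric]) (auto dest: collatz_pow_of_pre_pow)
    finally show ?thesis using False by simp
  qed
qed

lemma Tcoef_pow_sum: "(Tcoef ^^ p) (\<lambda>i. \<Sum>n\<in>F. v n i) m = (\<Sum>n\<in>F. (Tcoef ^^ p) (v n) m)"
  by (simp add: Tcoef_pow_eq_sum sum.swap[of _ F])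

lemma Tcoef_pow_add: "(Tcoef ^^ p) (\<lambda>i. c i + d i) m = (Tcoef ^^ p) c m + (Tcoef ^^ p) d m"
  by (simp add: Tcoef_pow_eq_sum sum.distrib)

lemma Tcoef_pow_diff: "(Tcoef ^^ p) (\<lambda>i. c i - d i) m = (Tcoef ^^ p) c m - (Tcoef ^^ p) d m"
  by (simp add: Tcoef_pow_eq_sum sum_subtractf)

lemma Tcoef_pow_mult: "(Tcoef ^^ p) (\<lambda>i. a * c i) m = a * (Tcoef ^^ p) c m"
  by (simp add: Tcoef_pow_eq_sum sum_distrib_left)

lemma Tcoef_pow_zero [simp]: "(Tcoef ^^ p) (\<lambda>_. 0) = (\<lambda>_. 0)"
  by (simp add: Tcoef_pow_eq_sum fun_eq_iff)

section \<open>Dilation, a right inverse of the powers of the operator\<close>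

definition supp_ge3 :: "(nat \<Rightarrow> complex) \<Rightarrow> bool" where
  "supp_ge3 y \<longleftrightarrow> (\<forall>i<3. y i = 0)"

definition dilate :: "nat \<Rightarrow> (nat \<Rightarrow> complex) \<Rightarrow> nat \<Rightarrow> complex" where
  "dilate n y i = (if 2 ^ n dvd i then y (i div 2 ^ n) else 0)"

lemma dilate_nonzero_ge:
  assumes y: "supp_ge3 y" and ne: "dilate n y i \<noteq> 0"
  shows "3 * 2 ^ n \<le> i"
proof -
  from ne have d: "2 ^ n dvd i" and "y (i div 2 ^ n) \<noteq> 0"
    by (auto simp: dilate_def split: if_splits)
  then have "3 \<le> i div 2 ^ n" using y by (auto simp: supp_ge3_def) (meson not_le)
  then have "3 * 2 ^ n \<le> i div 2 ^ n * 2 ^ n" by simp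
  also have "\<dots> = i" using d by simp
  finally show ?thesis .
qed

lemma dilate_eq_0_if_le:
  assumes y: "supp_ge3 y" and "i \<le> n"
  shows "dilate n y i = 0"
proof (rule ccontr)
  assume "dilate n y i \<noteq> 0"
  hence "3 * 2 ^ n \<le> i" by (rule dilate_nonzero_ge[OF y])
  moreover have "n < 3 * 2 ^ n" using less_exp[of n] by linarith
  ultimately show False using \<open>i \<le> n\<close> by linarith
qed

lemma Tcoef_dilate_Suc:
  assumes y: "supp_ge3 y"
  shows "Tcoef (dilate (Suc n) y) = dilate n y"
proof
  fix m
  show "Tcoef (dilate (Suc n) y) m = dilate n y m"
  proof (cases "m < 3")
    case True
    have "dilate n y m = 0"
      using dilate_nonzero_ge[OF y, of n m] True less_exp[of n] by fastforce
    thus ?thesis using True by (simp add: Tcoef_eq_sum)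
  next
    case False
    have odd_pre: "dilate (Suc n) y j = 0" if "j \<in> collatz_pre m - {2 * m}" for j
    proof -
      have "j = (2 * m - 1) div 3" "j \<in> collatz_pre m" using that collatz_pre_subset by auto
      hence "odd j" by (auto simp: collatz_pre_def collatz_def)
      thus ?thesis by (auto simp: dilate_def)
    qed
    have "Tcoef (dilate (Suc n) y) m = sum (dilate (Suc n) y) (collatz_pre m)"
      using False by (simp add: Tcoef_eq_sum)
    also have "\<dots> = dilate (Suc n) y (2 * m)"
      using double_in_collatz_pre[of m] False odd_pre by (simp add: sum.remove)
    also have "\<dots> = dilate n y m" by (simp add: dilate_def)
    finally show ?thesis .
  qed
qed

lemma Tcoef_pow_dilate:
  assumes y: "supp_ge3 y" and "m \<le> n"
  shows "(Tcoef ^^ m) (dilate n y) = dilate (n - m) y"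
  using \<open>m \<le> n\<close>
proof (induction m)
  case 0 thus ?case by simp
next
  case (Suc m)
  then have "(Tcoef ^^ Suc m) (dilate n y) = Tcoef (dilate (Suc (n - Suc m)) y)"
    by (simp add: Suc_diff_Suc)
  also have "\<dots> = dilate (n - Suc m) y" by (rule Tcoef_dilate_Suc[OF y])
  finally show ?case .
qed

lemma Tcoef_pow_dilate_ge:
  assumes y: "supp_ge3 y" and "n \<le> m"
  shows "(Tcoef ^^ m) (dilate n y) = (Tcoef ^^ (m - n)) y"
proof -
  have "(Tcoef ^^ m) (dilate n y) = (Tcoef ^^ (m - n)) ((Tcoef ^^ n) (dilate n y))"
    using funpow_add[of "m - n" n Tcoef] assms(2) by simp
  also have "(Tcoef ^^ n) (dilate n y) = y"
    using Tcoef_pow_dilate[OF y, of n n] by (simp add: dilate_def fun_eq_iff)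
  finally show ?thesis .
qed

section \<open>Weighted norms of coefficient sequences\<close>

definition wsummable :: "(nat \<Rightarrow> real) \<Rightarrow> (nat \<Rightarrow> complex) \<Rightarrow> bool" where
  "wsummable \<omega> c \<longleftrightarrow> summable (\<lambda>n. (cmod (c n))\<^sup>2 / \<omega> n)"

definition seq_norm :: "(nat \<Rightarrow> real) \<Rightarrow> (nat \<Rightarrow> complex) \<Rightarrow> real" where
  "seq_norm \<omega> c = sqrt (\<Sum>n. (cmod (c n))\<^sup>2 / \<omega> n)"

definition wnorm :: "(nat \<Rightarrow> real) \<Rightarrow> (nat \<Rightarrow> complex) \<Rightarrow> nat set \<Rightarrow> real" where
  "wnorm \<omega> c A = L2_set (\<lambda>i. cmod (c i) / sqrt (\<omega> i)) A"

lemma normX_eq_seq_norm: "normX \<omega> f = seq_norm \<omega> (coef f)"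
  by (simp add: normX_def seq_norm_def)

lemma inX_iff: "inX \<omega> f \<longleftrightarrow> f holomorphic_on ball 0 1 \<and> supp_ge3 (coef f) \<and> wsummable \<omega> (coef f)"
  by (simp add: inX_def supp_ge3_def wsummable_def)

lemma wnorm_nonneg: "0 \<le> wnorm \<omega> c A"
  by (simp add: wnorm_def)

lemma wnorm_cong: "(\<And>i. i \<in> A \<Longrightarrow> c i = d i) \<Longrightarrow> wnorm \<omega> c A = wnorm \<omega> d A"
  unfolding wnorm_def by (rule L2_set_cong) auto

lemma wnorm_mult: "wnorm \<omega> (\<lambda>i. a * c i) A = cmod a * wnorm \<omega> c A"
  unfolding wnorm_def by (subst L2_set_right_distrib) (auto simp: norm_mult)

lemma wnorm_minus_commute: "wnorm \<omega> (\<lambda>i. c i - d i) A = wnorm \<omega> (\<lambda>i. d i - c i) A"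
  by (simp add: wnorm_def norm_minus_commute)

locale pos_weight =
  fixes \<omega> :: "nat \<Rightarrow> real"
  assumes pos: "\<And>n. 1 \<le> n \<Longrightarrow> 0 < \<omega> n"
begin

lemma wnorm_add_le:
  assumes "A \<subseteq> {1..}"
  shows "wnorm \<omega> (\<lambda>i. c i + d i) A \<le> wnorm \<omega> c A + wnorm \<omega> d A"
proof -
  have "wnorm \<omega> (\<lambda>i. c i + d i) A
      \<le> L2_set (\<lambda>i. cmod (c i) / sqrt (\<omega> i) + cmod (d i) / sqrt (\<omega> i)) A"
    unfolding wnorm_def
  proof (rule L2_set_mono)
    fix i assume "i \<in> A"
    hence "0 < \<omega> i" using assms pos by auto
    thus "cmod (c i + d i) / sqrt (\<omega> i) \<le> cmod (c i) / sqrt (\<omega> i) + cmod (d i) / sqrt (\<omega> i)"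
      "0 \<le> cmod (c i + d i) / sqrt (\<omega> i)"
      by (simp_all add: divide_right_mono norm_triangle_ineq flip: add_divide_distrib)
  qed
  also have "\<dots> \<le> wnorm \<omega> c A + wnorm \<omega> d A"
    unfolding wnorm_def by (rule L2_set_triangle_ineq)
  finally show ?thesis .
qed

lemma wnorm_diff_le:
  assumes "A \<subseteq> {1..}"
  shows "wnorm \<omega> (\<lambda>i. c i - d i) A \<le> wnorm \<omega> c A + wnorm \<omega> d A"
  using wnorm_add_le[OF assms, of c "\<lambda>i. - d i"] by (simp add: wnorm_def)

lemma wnorm_triangle:
  assumes "A \<subseteq> {1..}"
  shows "wnorm \<omega> (\<lambda>i. c i - d i) A \<le> wnorm \<omega> (\<lambda>i. c i - e i) A + wnorm \<omega> (\<lambda>i. e i - d i) A"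
  using wnorm_add_le[OF assms, of "\<lambda>i. c i - e i" "\<lambda>i. e i - d i"] by simp

lemma wnorm_sum_le:
  assumes "A \<subseteq> {1..}"
  shows "wnorm \<omega> (\<lambda>i. \<Sum>n\<in>F. v n i) A \<le> (\<Sum>n\<in>F. wnorm \<omega> (v n) A)"
proof (induction F rule: infinite_finite_induct)
  case (insert x F)
  have "wnorm \<omega> (\<lambda>i. v x i + (\<Sum>n\<in>F. v n i)) A \<le> wnorm \<omega> (v x) A + wnorm \<omega> (\<lambda>i. \<Sum>n\<in>F. v n i) A"
    by (rule wnorm_add_le[OF assms])
  thus ?case using insert by simp
qed (simp_all add: wnorm_def L2_set_0')

lemma wnorm_sq:
  assumes "A \<subseteq> {1..}"
  shows "(wnorm \<omega> c A)\<^sup>2 = (\<Sum>i\<in>A. (cmod (c i))\<^sup>2 / \<omega> i)"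
proof -
  have "(wnorm \<omega> c A)\<^sup>2 = (\<Sum>i\<in>A. (cmod (c i) / sqrt (\<omega> i))\<^sup>2)"
    unfolding wnorm_def L2_set_def by (simp add: sum_nonneg)
  also have "\<dots> = (\<Sum>i\<in>A. (cmod (c i))\<^sup>2 / \<omega> i)"
  proof (rule sum.cong)
    fix i assume "i \<in> A" hence "0 < \<omega> i" using assms pos by auto
    thus "(cmod (c i) / sqrt (\<omega> i))\<^sup>2 = (cmod (c i))\<^sup>2 / \<omega> i" by (simp add: power_divide)
  qed simp
  finally show ?thesis .
qed

lemma wterm_nonneg: "c 0 = 0 \<Longrightarrow> 0 \<le> (cmod (c n))\<^sup>2 / \<omega> n"
  using pos[of n] by (cases n) auto

text \<open>The index \<open>0\<close>, where the weight is not assumed positive, is excluded by \<open>c 0 = 0\<close>.\<close>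

lemma wsummable_seq_norm_le:
  assumes c0: "c 0 = 0" and B: "\<And>K. wnorm \<omega> c {1..<K} \<le> B"
  shows "wsummable \<omega> c" "seq_norm \<omega> c \<le> B"
proof -
  have B0: "0 \<le> B" using B[of 0] wnorm_nonneg order_trans by blast
  have partial: "(\<Sum>i<K. (cmod (c i))\<^sup>2 / \<omega> i) \<le> B\<^sup>2" for K
  proof -
    have "(\<Sum>i<K. (cmod (c i))\<^sup>2 / \<omega> i) = (\<Sum>i\<in>{1..<K}. (cmod (c i))\<^sup>2 / \<omega> i)"
    proof (cases K)
      case (Suc K')
      have "{..<K} = insert 0 {1..<K}" using Suc by auto
      thus ?thesis using c0 by simp
    qed simp
    also have "\<dots> = (wnorm \<omega> c {1..<K})\<^sup>2" by (rule wnorm_sq[symmetric]) auto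
    also have "\<dots> \<le> B\<^sup>2" using B[of K] wnorm_nonneg by (simp add: power_mono)
    finally show ?thesis .
  qed
  have s: "summable (\<lambda>i. (cmod (c i))\<^sup>2 / \<omega> i)"
  proof (rule bounded_imp_summable)
    show "\<And>n. 0 \<le> (cmod (c n))\<^sup>2 / \<omega> n" using wterm_nonneg[of c, OF c0] .
    show "(\<Sum>k\<le>n. (cmod (c k))\<^sup>2 / \<omega> k) \<le> B\<^sup>2" for n
      using partial[of "Suc n"] by (simp add: lessThan_Suc_atMost)
  qed
  thus "wsummable \<omega> c" by (simp add: wsummable_def)
  have "(\<Sum>i. (cmod (c i))\<^sup>2 / \<omega> i) \<le> B\<^sup>2" by (rule suminf_le_const[OF s partial])
  thus "seq_norm \<omega> c \<le> B" unfolding seq_norm_def by (rule real_le_lsqrt[OF B0])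
qed

lemma wnorm_tail_small:
  assumes c0: "c 0 = 0" and s: "wsummable \<omega> c" and \<epsilon>: "0 < \<epsilon>"
  shows "\<exists>N\<ge>3. \<forall>K. (\<Sum>i\<in>{N..<K}. (cmod (c i))\<^sup>2 / \<omega> i) \<le> \<epsilon>"
proof -
  define g where "g = (\<lambda>i. (cmod (c i))\<^sup>2 / \<omega> i)"
  have sg: "summable g" using s by (simp add: wsummable_def g_def)
  have g0: "\<And>i. 0 \<le> g i" unfolding g_def using wterm_nonneg[of c, OF c0] .
  obtain N0 where N0: "\<forall>n\<ge>N0. dist (\<Sum>i<n. g i) (suminf g) < \<epsilon>"
    using summable_LIMSEQ[OF sg] \<epsilon> unfolding lim_sequentially by blast
  define N where "N = max N0 3"
  have "(\<Sum>i\<in>{N..<K}. g i) \<le> \<epsilon>" for K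
  proof (cases "N \<le> K")
    case True
    have "(\<Sum>i\<in>{N..<K}. g i) = (\<Sum>i<K. g i) - (\<Sum>i<N. g i)"
      using sum.atLeastLessThan_concat[of 0 N K g] True by (simp add: atLeast0LessThan)
    also have "\<dots> \<le> suminf g - (\<Sum>i<N. g i)"
      using sum_le_suminf[OF sg, of "{..<K}"] g0 by simp
    also have "\<dots> \<le> \<epsilon>" using N0[rule_format, of N] by (simp add: N_def dist_real_def)
    finally show ?thesis .
  qed (use \<epsilon> in simp)
  thus ?thesis unfolding g_def N_def by (intro exI[of _ "max N0 3"]) auto
qed

lemma wnorm_tail_le:
  assumes c0: "c 0 = 0" and s: "wsummable \<omega> c" and \<epsilon>: "0 < \<epsilon>"
  shows "\<exists>N\<ge>3. \<forall>K. wnorm \<omega> (\<lambda>i. if N \<le> i then c i else 0) {1..<K} \<le> \<epsilon>"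
proof -
  obtain N where N3: "3 \<le> N" and N: "\<forall>K. (\<Sum>i\<in>{N..<K}. (cmod (c i))\<^sup>2 / \<omega> i) \<le> \<epsilon>\<^sup>2"
    using wnorm_tail_small[OF c0 s, of "\<epsilon>\<^sup>2"] \<epsilon> by auto
  have "wnorm \<omega> (\<lambda>i. if N \<le> i then c i else 0) {1..<K} \<le> \<epsilon>" for K
  proof -
    have "(wnorm \<omega> (\<lambda>i. if N \<le> i then c i else 0) {1..<K})\<^sup>2
        = (\<Sum>i\<in>{1..<K}. if N \<le> i then (cmod (c i))\<^sup>2 / \<omega> i else 0)"
      by (subst wnorm_sq) (auto intro: sum.cong)
    also have "\<dots> = (\<Sum>i\<in>{i\<in>{1..<K}. N \<le> i}. (cmod (c i))\<^sup>2 / \<omega> i)"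
      by (rule sum.inter_filter[symmetric]) simp
    also have "{i\<in>{1..<K}. N \<le> i} = {N..<K}" using N3 by auto
    finally have "(wnorm \<omega> (\<lambda>i. if N \<le> i then c i else 0) {1..<K})\<^sup>2 \<le> \<epsilon>\<^sup>2" using N by simp
    thus ?thesis by (rule power2_le_imp_le) (use \<epsilon> in simp)
  qed
  thus ?thesis using N3 by blast
qed

end

section \<open>Vectors killed by a power of the operator\<close>

definition unit_seq :: "nat \<Rightarrow> nat \<Rightarrow> complex" where
  "unit_seq k = (\<lambda>i. if i = k then 1 else 0)"

definition orbit :: "nat \<Rightarrow> nat \<Rightarrow> nat" where
  "orbit k p = (collatz ^^ p) k"

lemma orbit_0 [simp]: "orbit k 0 = k"
  by (simp add: orbit_def)

lemma orbit_Suc: "orbit k (Suc p) = collatz (orbit k p)"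
  by (simp add: orbit_def)

lemma orbit_orbit: "orbit (orbit k p) q = orbit k (q + p)"
  by (simp add: orbit_def funpow_add)

lemma Tcoef_unit_seq:
  "Tcoef (unit_seq j) = (if 3 \<le> j \<and> 3 \<le> collatz j then unit_seq (collatz j) else (\<lambda>_. 0))"
proof
  fix m
  have "Tcoef (unit_seq j) m = (if m < 3 then 0 else if j \<in> collatz_pre m then 1 else 0)"
    by (simp add: Tcoef_eq_sum unit_seq_def sum.delta')
  thus "Tcoef (unit_seq j) m = (if 3 \<le> j \<and> 3 \<le> collatz j then unit_seq (collatz j) else (\<lambda>_. 0)) m"
    by (auto simp: collatz_pre_def unit_seq_def)
qed

lemma Tcoef_pow_unit_seq:
  assumes "3 \<le> k"
  shows "(Tcoef ^^ p) (unit_seq k) =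
    (if \<forall>q\<le>p. 3 \<le> orbit k q then unit_seq (orbit k p) else (\<lambda>_. 0))"
proof (induction p)
  case 0 thus ?case using assms by simp
next
  case (Suc p)
  show ?case
  proof (cases "\<forall>q\<le>p. 3 \<le> orbit k q")
    case True
    hence "(Tcoef ^^ Suc p) (unit_seq k) = Tcoef (unit_seq (orbit k p))" using Suc by simp
    also have "\<dots> = (if 3 \<le> orbit k (Suc p) then unit_seq (orbit k (Suc p)) else (\<lambda>_. 0))"
      using True by (simp add: Tcoef_unit_seq orbit_Suc)
    finally show ?thesis using True le_Suc_eq by auto
  next
    case False
    hence "(Tcoef ^^ p) (unit_seq k) = (\<lambda>_. 0)" using Suc.IH by (simp only: if_False)
    hence "(Tcoef ^^ Suc p) (unit_seq k) = Tcoef (\<lambda>_. 0)" by simp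
    also have "\<dots> = (\<lambda>_. 0)" using Tcoef_pow_zero[of 1] by simp
    finally show ?thesis using False by auto
  qed
qed

lemma dilate_unit_seq: "dilate p (unit_seq x) = unit_seq (2 ^ p * x)"
  by (auto simp: dilate_def unit_seq_def fun_eq_iff)

definition orbit_ge3 :: "nat \<Rightarrow> bool" where
  "orbit_ge3 k \<longleftrightarrow> (\<forall>q. 3 \<le> orbit k q)"

definition odd_times :: "nat \<Rightarrow> nat set" where
  "odd_times k = {p. odd (orbit k p)}"

lemma infinite_odd_times:
  assumes "orbit_ge3 k"
  shows "infinite (odd_times k)"
proof
  assume "finite (odd_times k)"
  then obtain P where "\<forall>p\<in>odd_times k. p < P" using finite_nat_bounded by blast
  hence P: "\<forall>p\<ge>P. even (orbit k p)" unfolding odd_times_def by (meson leD mem_Collect_eq)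
  have halving: "orbit k (P + t) * 2 ^ t = orbit k P" for t
  proof (induction t)
    case (Suc t)
    have "even (orbit k (P + t))" using P by simp
    hence "orbit k (P + Suc t) * 2 = orbit k (P + t)" by (simp add: orbit_Suc collatz_def)
    hence "orbit k (P + Suc t) * 2 ^ Suc t = orbit k (P + t) * 2 ^ t" by (simp add: mult.assoc)
    thus ?case using Suc by simp
  qed simp
  have "3 \<le> orbit k (P + orbit k P)" using assms by (simp add: orbit_ge3_def)
  hence "3 * 2 ^ orbit k P \<le> orbit k P" using halving[of "orbit k P"] by (metis mult_le_mono1)
  moreover have "orbit k P < 2 ^ orbit k P" by (rule less_exp)
  ultimately show False by linarith
qed

text \<open>\<^term>\<open>orbit_lift k p\<close> is mapped by \<open>collatz ^^ p\<close> to \<^term>\<open>orbit k p\<close>, by halving only.\<close>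

definition orbit_lift :: "nat \<Rightarrow> nat \<Rightarrow> nat" where
  "orbit_lift k p = 2 ^ p * orbit k p"

lemma orbit_lift_Suc:
  "orbit_lift k (Suc p) = (if even (orbit k p) then orbit_lift k p else 2 ^ p * (3 * orbit k p + 1))"
proof (cases "even (orbit k p)")
  case True
  then obtain x where "orbit k p = 2 * x" by blast
  thus ?thesis by (simp add: orbit_lift_def orbit_Suc collatz_def)
next
  case False
  hence "2 * collatz (orbit k p) = 3 * orbit k p + 1" by (simp add: collatz_def)
  moreover have "orbit_lift k (Suc p) = 2 ^ p * (2 * collatz (orbit k p))"
    by (simp add: orbit_lift_def orbit_Suc)
  ultimately show ?thesis using False by simp
qed

lemma orbit_lift_le_Suc: "orbit_lift k p \<le> orbit_lift k (Suc p)"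
  by (simp add: orbit_lift_Suc) (simp add: orbit_lift_def)

lemma orbit_lift_less_Suc: "odd (orbit k p) \<Longrightarrow> orbit_lift k p < orbit_lift k (Suc p)"
  by (simp add: orbit_lift_Suc) (simp add: orbit_lift_def)

lemma inj_on_orbit_lift: "inj_on (orbit_lift k) (odd_times k)"
proof -
  have less: "orbit_lift k p < orbit_lift k p'" if "p \<in> odd_times k" "p < p'" for p p'
  proof -
    have "orbit_lift k p < orbit_lift k (Suc p)"
      using that by (simp add: odd_times_def orbit_lift_less_Suc)
    also have "\<dots> \<le> orbit_lift k p'"
      using lift_Suc_mono_le[of "orbit_lift k", OF orbit_lift_le_Suc] that by simp
    finally show ?thesis .
  qed
  show ?thesis by (rule inj_onI) (metis less less_irrefl nat_neq_iff)
qed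

lemma orbit_lift_ge3:
  assumes "orbit_ge3 k"
  shows "3 \<le> orbit_lift k p"
proof -
  have "3 \<le> orbit k p" using assms by (simp add: orbit_ge3_def)
  also have "\<dots> \<le> orbit_lift k p" by (simp add: orbit_lift_def)
  finally show ?thesis .
qed

lemma Tcoef_pow_unit_seq_orbit_lift:
  assumes k: "orbit_ge3 k" and "p \<le> K"
  shows "(Tcoef ^^ K) (unit_seq (orbit_lift k p)) = unit_seq (orbit k K)"
proof -
  have p3: "3 \<le> orbit k p" using k by (simp add: orbit_ge3_def)
  have "(Tcoef ^^ K) (unit_seq (orbit_lift k p)) = (Tcoef ^^ K) (dilate p (unit_seq (orbit k p)))"
    by (simp add: dilate_unit_seq orbit_lift_def)
  also have "\<dots> = (Tcoef ^^ (K - p)) (unit_seq (orbit k p))"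
    using p3 \<open>p \<le> K\<close> by (intro Tcoef_pow_dilate_ge) (simp_all add: supp_ge3_def unit_seq_def)
  also have "\<dots> = unit_seq (orbit k K)"
    using Tcoef_pow_unit_seq[OF p3, of "K - p"] k \<open>p \<le> K\<close> by (simp add: orbit_orbit orbit_ge3_def)
  finally show ?thesis .
qed

definition odd_sample :: "nat \<Rightarrow> nat \<Rightarrow> nat set" where
  "odd_sample k M = (SOME F. finite F \<and> card F = Suc M \<and> F \<subseteq> odd_times k)"

lemma odd_sample:
  assumes "orbit_ge3 k"
  shows "finite (odd_sample k M)" "card (odd_sample k M) = Suc M" "odd_sample k M \<subseteq> odd_times k"
proof -
  have "\<exists>F. finite F \<and> card F = Suc M \<and> F \<subseteq> odd_times k"
    using infinite_arbitrarily_large[OF infinite_odd_times[OF assms]] .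
  from someI_ex[OF this] show "finite (odd_sample k M)" "card (odd_sample k M) = Suc M"
    "odd_sample k M \<subseteq> odd_times k"
    unfolding odd_sample_def by blast+
qed

text \<open>If the orbit of \<open>k\<close> drops below \<open>3\<close>, the unit vector at \<open>k\<close> is itself killed. Otherwise
  all the \<open>M + 1\<close> distinct points \<^term>\<open>orbit_lift k p\<close>, \<open>p \<in> odd_sample k M\<close>, are mapped
  to the same unit vector as \<open>k\<close> by a large power of the operator, so subtracting their average
  kills the unit vector at \<open>k\<close> at the cost of an error of norm \<open>O(M\<^sup>-\<^sup>1\<^sup>/\<^sup>2)\<close>.\<close>

definition killed_approx :: "nat \<Rightarrow> nat \<Rightarrow> nat \<Rightarrow> complex" where
  "killed_approx k M = (if k < 3 then (\<lambda>_. 0) else if \<not> orbit_ge3 k then unit_seq k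
     else (\<lambda>i. unit_seq k i - (1 / of_nat (Suc M)) * (\<Sum>p\<in>odd_sample k M. unit_seq (orbit_lift k p) i)))"

definition eventually_killed :: "(nat \<Rightarrow> complex) \<Rightarrow> bool" where
  "eventually_killed y \<longleftrightarrow> (\<exists>K. (Tcoef ^^ K) y = (\<lambda>_. 0))"

lemma Tcoef_pow_eq_0_mono:
  assumes "(Tcoef ^^ K) y = (\<lambda>_. 0)" and "K \<le> K'"
  shows "(Tcoef ^^ K') y = (\<lambda>_. 0)"
  using funpow_add[of "K' - K" K Tcoef] assms by simp

lemma eventually_killed_add:
  assumes "eventually_killed y" "eventually_killed z"
  shows "eventually_killed (\<lambda>i. y i + z i)"
proof -
  obtain K1 K2 where "(Tcoef ^^ K1) y = (\<lambda>_. 0)" "(Tcoef ^^ K2) z = (\<lambda>_. 0)"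
    using assms by (auto simp: eventually_killed_def)
  hence "(Tcoef ^^ (K1 + K2)) y = (\<lambda>_. 0)" "(Tcoef ^^ (K1 + K2)) z = (\<lambda>_. 0)"
    by (auto elim!: Tcoef_pow_eq_0_mono)
  hence "(Tcoef ^^ (K1 + K2)) (\<lambda>i. y i + z i) = (\<lambda>_. 0)"
    by (simp add: Tcoef_pow_add fun_eq_iff)
  thus ?thesis by (auto simp: eventually_killed_def)
qed

lemma eventually_killed_mult:
  assumes "eventually_killed y"
  shows "eventually_killed (\<lambda>i. a * y i)"
proof -
  obtain K where "(Tcoef ^^ K) y = (\<lambda>_. 0)" using assms by (auto simp: eventually_killed_def)
  hence "(Tcoef ^^ K) (\<lambda>i. a * y i) = (\<lambda>_. 0)" by (simp add: Tcoef_pow_mult fun_eq_iff)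
  thus ?thesis by (auto simp: eventually_killed_def)
qed

lemma eventually_killed_zero: "eventually_killed (\<lambda>_. 0)"
  by (auto simp: eventually_killed_def)

lemma eventually_killed_killed_approx: "eventually_killed (killed_approx k M)"
proof (cases "k < 3")
  case True thus ?thesis by (simp add: killed_approx_def eventually_killed_zero)
next
  case False
  hence k3: "3 \<le> k" by simp
  show ?thesis
  proof (cases "orbit_ge3 k")
    case False
    then obtain q where "orbit k q < 3" unfolding orbit_ge3_def by (meson not_le)
    hence "(Tcoef ^^ q) (unit_seq k) = (\<lambda>_. 0)" using Tcoef_pow_unit_seq[OF k3, of q] by auto
    thus ?thesis using False k3 by (auto simp: killed_approx_def eventually_killed_def)
  next
    case True
    define F where "F = odd_sample k M"
    have F: "finite F" "card F = Suc M" using odd_sample[OF True] by (auto simp: F_def)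
    define K where "K = Max F"
    have "(Tcoef ^^ K) (killed_approx k M) m = 0" for m
    proof -
      define a :: complex where "a = 1 / of_nat (Suc M)"
      have "killed_approx k M = (\<lambda>i. unit_seq k i - a * (\<Sum>p\<in>F. unit_seq (orbit_lift k p) i))"
        using True k3 by (simp add: killed_approx_def F_def a_def)
      hence "(Tcoef ^^ K) (killed_approx k M) m
          = (Tcoef ^^ K) (unit_seq k) m - a * (\<Sum>p\<in>F. (Tcoef ^^ K) (unit_seq (orbit_lift k p)) m)"
        by (simp only: Tcoef_pow_diff Tcoef_pow_mult Tcoef_pow_sum)
      also have "(\<Sum>p\<in>F. (Tcoef ^^ K) (unit_seq (orbit_lift k p)) m) = (\<Sum>p\<in>F. unit_seq (orbit k K) m)"
        using F by (intro sum.cong) (simp_all add: Tcoef_pow_unit_seq_orbit_lift[OF True] K_def)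
      also have "\<dots> = of_nat (Suc M) * unit_seq (orbit k K) m" using F by simp
      also have "(Tcoef ^^ K) (unit_seq k) m = unit_seq (orbit k K) m"
        using Tcoef_pow_unit_seq[OF k3, of K] True by (simp add: orbit_ge3_def)
      finally show ?thesis by (simp add: a_def del: of_nat_Suc)
    qed
    thus ?thesis by (auto simp: eventually_killed_def)
  qed
qed

definition finite_supp :: "(nat \<Rightarrow> complex) \<Rightarrow> bool" where
  "finite_supp y \<longleftrightarrow> (\<exists>B. \<forall>i\<ge>B. y i = 0)"

lemma finite_supp_add: "finite_supp y \<Longrightarrow> finite_supp z \<Longrightarrow> finite_supp (\<lambda>i. y i + z i)"
  unfolding finite_supp_def by (metis add.right_neutral max.bounded_iff nat_le_linear)

lemma finite_supp_mult: "finite_supp y \<Longrightarrow> finite_supp (\<lambda>i. a * y i)"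
  unfolding finite_supp_def by auto

lemma finite_supp_unit_seq: "finite_supp (unit_seq k)"
  unfolding finite_supp_def unit_seq_def by (rule exI[of _ "Suc k"]) auto

lemma finite_supp_sum: "(\<And>p. p \<in> F \<Longrightarrow> finite_supp (v p)) \<Longrightarrow> finite_supp (\<lambda>i. \<Sum>p\<in>F. v p i)"
proof (induction F rule: infinite_finite_induct)
  case (insert x F)
  thus ?case using finite_supp_add[of "v x" "\<lambda>i. \<Sum>p\<in>F. v p i"] by simp
qed (simp_all add: finite_supp_def)

lemma finite_supp_killed_approx: "finite_supp (killed_approx k M)"
proof -
  have "finite_supp (\<lambda>i. unit_seq k i + (- 1 / of_nat (Suc M)) *
      (\<Sum>p\<in>odd_sample k M. unit_seq (orbit_lift k p) i))"
    by (intro finite_supp_add finite_supp_mult finite_supp_sum finite_supp_unit_seq)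
  moreover have "finite_supp (\<lambda>_. 0)" by (simp add: finite_supp_def)
  ultimately show ?thesis by (simp add: killed_approx_def finite_supp_unit_seq)
qed

lemma supp_ge3_killed_approx: "supp_ge3 (killed_approx k M)"
proof -
  have "killed_approx k M i = 0" if "i < 3" for i
  proof (cases "k < 3 \<or> \<not> orbit_ge3 k")
    case True thus ?thesis using that by (auto simp: killed_approx_def unit_seq_def)
  next
    case False
    hence "unit_seq (orbit_lift k p) i = 0" for p
      using orbit_lift_ge3[of k p] that by (simp add: unit_seq_def)
    thus ?thesis using False that by (simp add: killed_approx_def unit_seq_def)
  qed
  thus ?thesis by (simp add: supp_ge3_def)
qed

locale lower_bounded_weight = pos_weight +
  fixes \<delta> :: real
  assumes \<delta>_pos: "0 < \<delta>" and weight_ge: "\<And>n. 1 \<le> n \<Longrightarrow> \<delta> \<le> \<omega> n"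
begin

lemma inverse_weight_le: "1 \<le> n \<Longrightarrow> 1 / \<omega> n \<le> 1 / \<delta>"
  using weight_ge[of n] \<delta>_pos by (simp add: frac_le)

lemma wnorm_unit_seq_le:
  assumes A: "finite A" "A \<subseteq> {1..}"
  shows "wnorm \<omega> (unit_seq k) A \<le> sqrt (1 / \<delta>)"
proof -
  have "(wnorm \<omega> (unit_seq k) A)\<^sup>2 = (\<Sum>i\<in>A. if i = k then 1 / \<omega> k else 0)"
    unfolding wnorm_sq[OF A(2)] by (rule sum.cong) (auto simp: unit_seq_def)
  also have "\<dots> \<le> 1 / \<delta>" using inverse_weight_le[of k] A \<delta>_pos by (auto simp: sum.delta)
  finally show ?thesis by (rule real_le_rsqrt)
qed

lemma wnorm_killed_approx_err:
  assumes A: "finite A" "A \<subseteq> {1..}" and k: "3 \<le> k"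
  shows "wnorm \<omega> (\<lambda>i. unit_seq k i - killed_approx k M i) A \<le> sqrt (1 / (real (Suc M) * \<delta>))"
proof (cases "orbit_ge3 k")
  case False
  hence "(\<lambda>i. unit_seq k i - killed_approx k M i) = (\<lambda>i. 0 * unit_seq k i)"
    using k by (simp add: killed_approx_def)
  thus ?thesis using wnorm_mult[of \<omega> 0 "unit_seq k" A] \<delta>_pos by simp
next
  case True
  define F where "F = odd_sample k M"
  have F: "finite F" "card F = Suc M" "F \<subseteq> odd_times k"
    using odd_sample[OF True] by (auto simp: F_def)
  define G where "G = orbit_lift k ` F"
  have G: "finite G" "card G \<le> Suc M"
    using F card_image_le[of F "orbit_lift k"] by (auto simp: G_def)
  define g where "g = (\<lambda>i. \<Sum>p\<in>F. unit_seq (orbit_lift k p) i)"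
  have g: "g = (\<lambda>i. if i \<in> G then 1 else 0)"
  proof
    fix i
    have "inj_on (orbit_lift k) F" using inj_on_orbit_lift[of k] F(3) inj_on_subset by blast
    hence "g i = (\<Sum>j\<in>G. unit_seq j i)" unfolding g_def G_def by (simp add: sum.reindex)
    thus "g i = (if i \<in> G then 1 else 0)" using G by (simp add: unit_seq_def sum.delta)
  qed
  have "(wnorm \<omega> g A)\<^sup>2 = (\<Sum>i\<in>A. (cmod (g i))\<^sup>2 / \<omega> i)" by (rule wnorm_sq[OF A(2)])
  also have "\<dots> \<le> (\<Sum>i\<in>A. if i \<in> G then 1 / \<delta> else 0)"
    using A inverse_weight_le by (intro sum_mono) (auto simp: g)
  also have "\<dots> = real (card (A \<inter> G)) / \<delta>" by (simp add: sum.inter_restrict[symmetric, OF A(1)])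
  also have "\<dots> \<le> real (Suc M) / \<delta>"
    using card_mono[OF G(1), of "A \<inter> G"] G \<delta>_pos by (simp add: divide_right_mono del: of_nat_Suc)
  finally have g2: "(wnorm \<omega> g A)\<^sup>2 \<le> real (Suc M) / \<delta>" .
  have "(\<lambda>i. unit_seq k i - killed_approx k M i) = (\<lambda>i. (1 / of_nat (Suc M)) * g i)"
    using True k by (simp add: killed_approx_def g_def F_def)
  hence "wnorm \<omega> (\<lambda>i. unit_seq k i - killed_approx k M i) A = wnorm \<omega> g A / real (Suc M)"
    by (simp only: wnorm_mult) (simp add: norm_divide del: of_nat_Suc)
  hence "(wnorm \<omega> (\<lambda>i. unit_seq k i - killed_approx k M i) A)\<^sup>2 = (wnorm \<omega> g A)\<^sup>2 / (real (Suc M))\<^sup>2"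
    by (simp add: power_divide)
  also have "\<dots> \<le> (real (Suc M) / \<delta>) / (real (Suc M))\<^sup>2"
    by (rule divide_right_mono[OF g2]) simp
  also have "\<dots> = 1 / (real (Suc M) * \<delta>)" by (simp add: power2_eq_square del: of_nat_Suc)
  finally show ?thesis by (rule real_le_rsqrt)
qed

end

section \<open>A countable dense family of killed vectors\<close>

definition complex_of_rats :: "rat \<Rightarrow> rat \<Rightarrow> complex" where
  "complex_of_rats a b = Complex (of_rat a) (of_rat b)"

lemma exists_complex_of_rats_near:
  assumes "0 < \<eta>"
  shows "\<exists>a b. cmod (complex_of_rats a b - x) \<le> \<eta>"
proof -
  obtain a :: rat where a: "Re x - \<eta> / 2 < of_rat a" "of_rat a < Re x + \<eta> / 2"
    using of_rat_dense[of "Re x - \<eta> / 2" "Re x + \<eta> / 2"] assms by auto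
  obtain b :: rat where b: "Im x - \<eta> / 2 < of_rat b" "of_rat b < Im x + \<eta> / 2"
    using of_rat_dense[of "Im x - \<eta> / 2" "Im x + \<eta> / 2"] assms by auto
  have "cmod (complex_of_rats a b - x)
      \<le> \<bar>Re (complex_of_rats a b - x)\<bar> + \<bar>Im (complex_of_rats a b - x)\<bar>"
    by (rule cmod_le)
  also have "\<dots> \<le> \<eta>"
    using a b by (simp add: complex_of_rats_def abs_if)
  finally show ?thesis by blast
qed

lemma exists_complex_of_rats_seq_near:
  assumes "0 < \<eta>"
  shows "\<exists>qa qb. \<forall>k. cmod (complex_of_rats (qa k) (qb k) - a k) \<le> \<eta>"
proof -
  have "\<forall>k. \<exists>ab. cmod (complex_of_rats (fst ab) (snd ab) - a k) \<le> \<eta>"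
    using exists_complex_of_rats_near[OF assms] by simp
  hence "\<exists>ab. \<forall>k. cmod (complex_of_rats (fst (ab k)) (snd (ab k)) - a k) \<le> \<eta>"
    by (rule choice)
  then obtain ab where "\<forall>k. cmod (complex_of_rats (fst (ab k)) (snd (ab k)) - a k) \<le> \<eta>" ..
  thus ?thesis by (intro exI[of _ "\<lambda>k. fst (ab k)"] exI[of _ "\<lambda>k. snd (ab k)"])
qed

lemma unit_seq_expansion:
  assumes "supp_ge3 a"
  shows "a i = (\<Sum>k\<in>{3..<N}. a k * unit_seq k i) + (if N \<le> i then a i else 0)"
proof -
  have "(\<Sum>k\<in>{3..<N}. a k * unit_seq k i) = (\<Sum>k\<in>{3..<N}. if i = k then a k else 0)"
    by (rule sum.cong) (auto simp: unit_seq_def)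
  also have "\<dots> = (if i \<in> {3..<N} then a i else 0)" by (rule sum.delta') simp
  finally show ?thesis using assms by (auto simp: supp_ge3_def)
qed

type_synonym code = "nat \<times> (nat \<times> rat \<times> rat) list"

definition decode :: "code \<Rightarrow> nat \<Rightarrow> complex" where
  "decode cd = (\<lambda>i. sum_list (map (\<lambda>(k, a, b). complex_of_rats a b * killed_approx k (fst cd) i) (snd cd)))"

lemma decode_Nil: "decode (M, []) = (\<lambda>_. 0)"
  by (simp add: decode_def)

lemma decode_Cons:
  "decode (M, (k, a, b) # xs) = (\<lambda>i. complex_of_rats a b * killed_approx k M i + decode (M, xs) i)"
  by (simp add: decode_def)

lemma decode_upt:
  "decode (M, map (\<lambda>k. (k, qa k, qb k)) [m..<n]) i
     = (\<Sum>k\<in>{m..<n}. complex_of_rats (qa k) (qb k) * killed_approx k M i)"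
  by (simp add: decode_def o_def flip: sum_set_upt_conv_sum_list_nat)

lemma decode_minus_eq:
  assumes "supp_ge3 a"
  shows "decode (M, map (\<lambda>k. (k, qa k, qb k)) [3..<N]) i - a i
    = (\<Sum>k\<in>{3..<N}. complex_of_rats (qa k) (qb k) * (killed_approx k M i - unit_seq k i))
      + (\<Sum>k\<in>{3..<N}. (complex_of_rats (qa k) (qb k) - a k) * unit_seq k i)
      - (if N \<le> i then a i else 0)"
proof -
  have "(\<Sum>k\<in>{3..<N}. complex_of_rats (qa k) (qb k) * (killed_approx k M i - unit_seq k i))
      + (\<Sum>k\<in>{3..<N}. (complex_of_rats (qa k) (qb k) - a k) * unit_seq k i)
      = (\<Sum>k\<in>{3..<N}. complex_of_rats (qa k) (qb k) * killed_approx k M i - a k * unit_seq k i)"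
    by (simp add: sum.distrib[symmetric] algebra_simps)
  also have "\<dots> = decode (M, map (\<lambda>k. (k, qa k, qb k)) [3..<N]) i - (\<Sum>k\<in>{3..<N}. a k * unit_seq k i)"
    by (simp add: sum_subtractf decode_upt)
  finally show ?thesis by (subst unit_seq_expansion[OF assms, of i N]) simp
qed

lemma eventually_killed_decode: "eventually_killed (decode cd)"
proof (cases cd)
  case (Pair M xs)
  show ?thesis unfolding Pair
    by (induction xs) (auto simp: decode_Nil decode_Cons eventually_killed_zero
        intro!: eventually_killed_add eventually_killed_mult eventually_killed_killed_approx)
qed

lemma finite_supp_decode: "finite_supp (decode cd)"
proof (cases cd)
  case (Pair M xs)
  show ?thesis unfolding Pair
    by (induction xs) (auto simp: decode_Nil decode_Cons finite_supp_def[of "\<lambda>_. 0"]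
        intro!: finite_supp_add finite_supp_mult finite_supp_killed_approx)
qed

lemma supp_ge3_decode: "supp_ge3 (decode cd)"
proof (cases cd)
  case (Pair M xs)
  show ?thesis unfolding Pair
    using supp_ge3_killed_approx by (induction xs) (auto simp: decode_Nil decode_Cons supp_ge3_def)
qed

context lower_bounded_weight
begin

lemma wnorm_unit_seq_comb_le:
  "wnorm \<omega> (\<lambda>i. \<Sum>k\<in>S. d k * unit_seq k i) {1..<K} \<le> (\<Sum>k\<in>S. cmod (d k)) * sqrt (1 / \<delta>)"
proof -
  have "wnorm \<omega> (\<lambda>i. \<Sum>k\<in>S. d k * unit_seq k i) {1..<K} \<le> (\<Sum>k\<in>S. wnorm \<omega> (\<lambda>i. d k * unit_seq k i) {1..<K})"
    by (rule wnorm_sum_le) auto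
  also have "\<dots> = (\<Sum>k\<in>S. cmod (d k) * wnorm \<omega> (unit_seq k) {1..<K})"
    by (simp add: wnorm_mult)
  also have "\<dots> \<le> (\<Sum>k\<in>S. cmod (d k) * sqrt (1 / \<delta>))"
    by (intro sum_mono mult_left_mono wnorm_unit_seq_le) auto
  finally show ?thesis by (simp add: sum_distrib_right)
qed

lemma wnorm_killed_approx_comb_err:
  assumes "S \<subseteq> {3..}"
  shows "wnorm \<omega> (\<lambda>i. \<Sum>k\<in>S. d k * (killed_approx k M i - unit_seq k i)) {1..<K}
    \<le> (\<Sum>k\<in>S. cmod (d k)) * sqrt (1 / (real (Suc M) * \<delta>))"
proof -
  have "wnorm \<omega> (\<lambda>i. \<Sum>k\<in>S. d k * (killed_approx k M i - unit_seq k i)) {1..<K}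
      \<le> (\<Sum>k\<in>S. wnorm \<omega> (\<lambda>i. d k * (killed_approx k M i - unit_seq k i)) {1..<K})"
    by (rule wnorm_sum_le) auto
  also have "\<dots> = (\<Sum>k\<in>S. cmod (d k) * wnorm \<omega> (\<lambda>i. unit_seq k i - killed_approx k M i) {1..<K})"
    by (simp add: wnorm_mult wnorm_minus_commute[of _ "killed_approx _ M"])
  also have "\<dots> \<le> (\<Sum>k\<in>S. cmod (d k) * sqrt (1 / (real (Suc M) * \<delta>)))"
    using assms
      by (intro sum_mono mult_left_mono wnorm_killed_approx_err) (auto simp del: of_nat_Suc)
  finally show ?thesis by (simp add: sum_distrib_right)
qed

lemma exists_killed_approx_index:
  assumes "0 < \<epsilon>"
  shows "\<exists>M. Q * sqrt (1 / (real (Suc M) * \<delta>)) \<le> \<epsilon>"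
proof -
  obtain M :: nat where M: "Q\<^sup>2 / (\<epsilon>\<^sup>2 * \<delta>) \<le> real M" using real_arch_simple by blast
  have pos: "0 < real (Suc M) * \<delta>" using \<delta>_pos by simp
  have "Q\<^sup>2 \<le> real M * (\<epsilon>\<^sup>2 * \<delta>)"
    using M assms \<delta>_pos by (simp add: pos_divide_le_eq)
  also have "\<dots> \<le> \<epsilon>\<^sup>2 * (real (Suc M) * \<delta>)"
    using assms \<delta>_pos by (simp add: algebra_simps)
  finally have "Q\<^sup>2 \<le> \<epsilon>\<^sup>2 * (real (Suc M) * \<delta>)" .
  hence "(Q * sqrt (1 / (real (Suc M) * \<delta>)))\<^sup>2 \<le> \<epsilon>\<^sup>2"
    using pos by (simp add: power_mult_distrib divide_le_eq mult.commute)
  hence "Q * sqrt (1 / (real (Suc M) * \<delta>)) \<le> \<epsilon>"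
    by (rule power2_le_imp_le) (use assms in simp)
  thus ?thesis ..
qed

lemma decode_dense:
  assumes a3: "supp_ge3 a" and s: "wsummable \<omega> a" and r: "0 < r"
  shows "\<exists>cd. \<forall>K. wnorm \<omega> (\<lambda>i. decode cd i - a i) {1..<K} \<le> r"
proof -
  obtain N where N3: "3 \<le> N" and tail: "\<And>K. wnorm \<omega> (\<lambda>i. if N \<le> i then a i else 0) {1..<K} \<le> r / 3"
    using wnorm_tail_le[of a "r / 3"] a3 s r by (auto simp: supp_ge3_def)
  define \<eta> where "\<eta> = r * sqrt \<delta> / (3 * real N)"
  have \<eta>: "0 < \<eta>" using r \<delta>_pos N3 by (simp add: \<eta>_def)
  obtain qa qb where near: "\<And>k. cmod (complex_of_rats (qa k) (qb k) - a k) \<le> \<eta>"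
    using exists_complex_of_rats_seq_near[OF \<eta>] by blast
  define q where "q k = complex_of_rats (qa k) (qb k)" for k
  obtain M where M: "(\<Sum>k\<in>{3..<N}. cmod (q k)) * sqrt (1 / (real (Suc M) * \<delta>)) \<le> r / 3"
    using exists_killed_approx_index[of "r / 3"] r by auto
  have coef_err: "wnorm \<omega> (\<lambda>i. \<Sum>k\<in>{3..<N}. (q k - a k) * unit_seq k i) {1..<K} \<le> r / 3" for K
  proof -
    have "wnorm \<omega> (\<lambda>i. \<Sum>k\<in>{3..<N}. (q k - a k) * unit_seq k i) {1..<K}
        \<le> (\<Sum>k\<in>{3..<N}. cmod (q k - a k)) * sqrt (1 / \<delta>)"
      by (rule wnorm_unit_seq_comb_le)
    also have "\<dots> \<le> real N * \<eta> * sqrt (1 / \<delta>)"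
      using sum_bounded_above[of "{3..<N}" "\<lambda>k. cmod (q k - a k)" \<eta>] near \<eta> \<delta>_pos
      by (intro mult_right_mono) (auto simp: q_def intro: order_trans mult_right_mono)
    also have "\<dots> = r / 3"
      using N3 \<delta>_pos by (simp add: \<eta>_def real_sqrt_divide field_simps)
    finally show ?thesis .
  qed
  define cd where "cd = (M, map (\<lambda>k. (k, qa k, qb k)) [3..<N])"
  have "wnorm \<omega> (\<lambda>i. decode cd i - a i) {1..<K} \<le> r" for K
  proof -
    have "wnorm \<omega> (\<lambda>i. decode cd i - a i) {1..<K}
        \<le> (wnorm \<omega> (\<lambda>i. \<Sum>k\<in>{3..<N}. q k * (killed_approx k M i - unit_seq k i)) {1..<K}
          + wnorm \<omega> (\<lambda>i. \<Sum>k\<in>{3..<N}. (q k - a k) * unit_seq k i) {1..<K})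
          + wnorm \<omega> (\<lambda>i. if N \<le> i then a i else 0) {1..<K}"
      unfolding cd_def decode_minus_eq[OF a3] q_def[symmetric]
      by (rule order_trans[OF wnorm_diff_le add_right_mono[OF wnorm_add_le]]) auto
    also have "\<dots> \<le> r / 3 + r / 3 + r / 3"
      using wnorm_killed_approx_comb_err[of "{3..<N}" q M K] M coef_err[of K] tail[of K]
      by (intro add_mono) force+
    finally show ?thesis by simp
  qed
  thus ?thesis by blast
qed

end

section \<open>Far apart sets of positive lower density\<close>

lemma mod_separation:
  fixes n m P s t :: nat and X :: int
  assumes P: "0 < P" and s: "n mod P = s" and t: "m mod P = t"
    and X1: "X \<le> \<bar>int s - int t\<bar>" and X2: "X \<le> int P - \<bar>int s - int t\<bar>"
  shows "X \<le> \<bar>int n - int m\<bar>"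
proof -
  define q where "q = int (n div P) - int (m div P)"
  have eq: "int n - int m = (int s - int t) + int P * q"
  proof -
    have "n = P * (n div P) + s" "m = P * (m div P) + t" using s t by (metis mult_div_mod_eq)+
    hence "int n = int P * int (n div P) + int s" "int m = int P * int (m div P) + int t"
      by (metis of_nat_add of_nat_mult)+
    thus ?thesis by (simp add: q_def algebra_simps)
  qed
  consider "q = 0" | "q \<ge> 1" | "q \<le> -1" by linarith
  thus ?thesis
  proof cases
    case 1 thus ?thesis using eq X1 by simp
  next
    case 2
    hence "int P \<le> int P * q" using P by simp
    thus ?thesis using eq X2 by linarith
  next
    case 3
    hence "int P * q \<le> - int P" using P
      by (metis mult.commute mult_minus1 mult_right_mono of_nat_0_le_iff)
    thus ?thesis using eq X2 by linarith
  qed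
qed

lemma density_factor_step:
  fixes b p :: real
  assumes "8 * p \<le> b" "1 \<le> p"
  shows "b * (1/2 + 1/(2 * p)) \<le> (b - 2) * (1/2 + 1/p)"
proof -
  have "(b - 2) * (1/2 + 1/p) - b * (1/2 + 1/(2 * p)) = (b - 2 * p - 4) / (2 * p)"
    using assms by (simp add: field_simps)
  also have "\<dots> \<ge> 0" using assms by (intro divide_nonneg_pos) auto
  finally show ?thesis by simp
qed

locale separated_sets =
  fixes gap :: "nat \<Rightarrow> nat"
  assumes gap_mono: "\<And>i j. i \<le> j \<Longrightarrow> gap i \<le> gap j"
begin

text \<open>Numbers are written in the mixed radix system with place values \<^term>\<open>modulus j\<close>.
  An element of \<^term>\<open>hits l\<close> has digit \<open>1\<close> at place \<open>l\<close>, digits \<open>0\<close> below it and, at every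
  place \<open>k > l\<close>, a digit from \<^term>\<open>digits k\<close>, which excludes \<open>1\<close> and \<open>radix k - 1\<close>.
  Elements of the same level differ by a multiple of \<open>modulus (Suc l)\<close>; for levels \<open>l < j\<close>
  the residues modulo \<open>modulus (Suc j)\<close> are far apart; and excluding two digits at every place
  costs only a factor \<open>1/2\<close> in density because the radices grow fast.\<close>

definition radix :: "nat \<Rightarrow> nat" where "radix j = 2 ^ (j + 3) * (gap (j + 2) + 1)"

fun modulus :: "nat \<Rightarrow> nat" where
  "modulus 0 = gap 1 + 1"
| "modulus (Suc j) = radix j * modulus j"

lemma modulus_Suc: "modulus (Suc j) = radix j * modulus j" by simp

declare modulus.simps(2)[simp del]

definition digits :: "nat \<Rightarrow> nat set" where "digits k = {d. d < radix k \<and> d \<noteq> 1 \<and> d \<noteq> radix k - 1}"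

fun hits_below :: "nat \<Rightarrow> nat \<Rightarrow> nat set" where
  "hits_below l 0 = {}"
| "hits_below l (Suc k) = (if k < l then {} else if k = l then {modulus l}
      else (\<lambda>(d,r). d * modulus k + r) ` (digits k \<times> hits_below l k))"

definition hits :: "nat \<Rightarrow> nat set" where "hits l = (\<Union>k. hits_below l k)"

lemma radix_ge: "2 ^ (j + 3) \<le> radix j" by (simp add: radix_def)

lemma radix_ge8: "8 \<le> radix j"
proof -
  have "(8::nat) = 2^3" by simp
  also have "\<dots> \<le> 2 ^ (j + 3)" by (rule power_increasing) auto
  finally show ?thesis using radix_ge[of j] by linarith
qed

lemma radix_ge_gap: "gap (j + 2) \<le> radix j"
proof -
  have "gap (j + 2) + 1 \<le> 2 ^ (j + 3) * (gap (j + 2) + 1)"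
    using mult_le_mono1[of 1 "2 ^ (j + 3)" "gap (j + 2)+1"] by simp
  thus ?thesis by (simp add: radix_def)
qed

lemma modulus_ge1: "1 \<le> modulus j"
proof (induction j)
  case (Suc j)
  have "1 * 1 \<le> radix j * modulus j" using radix_ge8[of j] Suc by (intro mult_le_mono) auto
  thus ?case by (simp add: modulus_Suc)
qed simp

lemma modulus_pos[simp]: "0 < modulus j" using modulus_ge1[of j] by simp

lemma modulus_Suc_ge: "8 * modulus j \<le> modulus (Suc j)"
  using radix_ge8[of j] by (simp add: modulus_Suc)

lemma modulus_less_Suc: "modulus j < modulus (Suc j)"
  using modulus_Suc_ge[of j] modulus_ge1[of j] by linarith

lemma modulus_mono: "i \<le> j \<Longrightarrow> modulus i \<le> modulus j"
  using lift_Suc_mono_le[of modulus, OF less_imp_le[OF modulus_less_Suc]] by blast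

lemma modulus_ge_pow2: "2 ^ j \<le> modulus j"
proof (induction j)
  case 0 thus ?case using modulus_ge1[of 0] by simp
next
  case (Suc j)
  have "2 ^ Suc j \<le> 8 * modulus j" using Suc by simp
  also have "8 * modulus j \<le> modulus (Suc j)" by (rule modulus_Suc_ge)
  finally show ?case .
qed

lemma modulus_ge_gap: "gap (Suc j) \<le> modulus j"
proof (cases j)
  case 0 thus ?thesis by simp
next
  case (Suc i)
  have "gap (Suc j) \<le> radix i" using radix_ge_gap[of i] Suc by simp
  also have "\<dots> \<le> radix i * modulus i" using modulus_ge1[of i] by simp
  finally show ?thesis using Suc by (simp add: modulus_Suc)
qed

lemma modulus_dvd: "i \<le> j \<Longrightarrow> modulus i dvd modulus j"
proof (induction j)
  case 0 thus ?case by simp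
next
  case (Suc j) thus ?case by (cases "i = Suc j") (auto simp: modulus_Suc)
qed

lemma zero_in_digits: "0 \<in> digits k" using radix_ge8[of k] by (auto simp: digits_def)

lemma hits_below_level_less: "n \<in> hits_below l k \<Longrightarrow> l < k"
  by (induction k) (auto split: if_splits)

lemma hits_below_bound: "n \<in> hits_below l k \<Longrightarrow> n + modulus (k - 1) \<le> modulus k"
proof (induction k arbitrary: n)
  case 0 thus ?case by simp
next
  case (Suc k)
  show ?case
  proof (cases "k = l")
    case True
    hence "n = modulus l" using Suc by simp
    thus ?thesis using True modulus_Suc_ge[of l] by simp
  next
    case False
    hence kl: "l < k" using Suc hits_below_level_less by (auto split: if_splits)
    then obtain d r where n: "n = d * modulus k + r" and d: "d \<in> digits k" and r: "r \<in> hits_below l k"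
      using Suc.prems False by (auto split: if_splits)
    have "r + modulus (k-1) \<le> modulus k" using Suc.IH[OF r] .
    hence rD: "r < modulus k" using modulus_ge1[of "k-1"] by linarith
    have "d \<le> radix k - 2" using d by (auto simp: digits_def)
    hence "(d + 2) * modulus k \<le> radix k * modulus k"
      using radix_ge8[of k] by (intro mult_right_mono) auto
    hence "n + modulus k < radix k * modulus k" using n rD by (simp add: algebra_simps)
    thus ?thesis by (simp add: modulus_Suc)
  qed
qed

lemma hits_below_less: "n \<in> hits_below l k \<Longrightarrow> n < modulus k"
  using hits_below_bound[of n l k] modulus_ge1[of "k-1"] by linarith

lemma hits_below_mod: "n \<in> hits_below l k \<Longrightarrow> n mod modulus (Suc l) = modulus l"
proof (induction k arbitrary: n)
  case 0 thus ?case by simp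
next
  case (Suc k)
  show ?case
  proof (cases "k = l")
    case True
    hence "n = modulus l" using Suc by simp
    thus ?thesis using modulus_less_Suc[of l] by simp
  next
    case False
    hence kl: "l < k" using Suc hits_below_level_less by (auto split: if_splits)
    then obtain d r where n: "n = d * modulus k + r" and r: "r \<in> hits_below l k"
      using Suc.prems False by (auto split: if_splits)
    have dv: "modulus (Suc l) dvd modulus k" using kl by (intro modulus_dvd) simp
    have "n mod modulus (Suc l) = r mod modulus (Suc l)"
      using dv n by (metis mod_mult_self4 dvd_def mult.assoc mult.commute)
    thus ?thesis using Suc.IH[OF r] by simp
  qed
qed

lemma hits_below_Suc: "n \<in> hits_below l k \<Longrightarrow> n \<in> hits_below l (Suc k)"
proof -
  assume n: "n \<in> hits_below l k"
  hence "l < k" by (rule hits_below_level_less)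
  moreover have "n = (\<lambda>(d,r). d * modulus k + r) (0, n)" by simp
  ultimately show ?thesis using n zero_in_digits[of k]
    by (auto simp del: hits_below.simps(2) simp: hits_below.simps(2)[of l k] intro!: image_eqI[of n _ "(0,n)"])
qed

lemma hits_below_mono:
  assumes "n \<in> hits_below l k" "k \<le> k'"
  shows "n \<in> hits_below l k'"
  using assms(2,1) by (induction k' rule: dec_induct) (blast intro: hits_below_Suc)+

lemma hits_below_large: "n \<in> hits l \<Longrightarrow> \<exists>k\<ge>K. n \<in> hits_below l k"
proof -
  assume "n \<in> hits l"
  then obtain k where "n \<in> hits_below l k" by (auto simp: hits_def)
  thus ?thesis using hits_below_mono[of n l k "max k K"] by (intro exI[of _ "max k K"]) auto
qed

lemma hits_mod: "n \<in> hits l \<Longrightarrow> n mod modulus (Suc l) = modulus l"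
  using hits_below_mod by (auto simp: hits_def)

lemma hits_ge: "n \<in> hits l \<Longrightarrow> modulus l \<le> n"
  using hits_mod[of n l] by (metis mod_less_eq_dividend)

lemma hits_below_mod_reduce:
  "n \<in> hits_below l k \<Longrightarrow> l < j \<Longrightarrow> j < k \<Longrightarrow> n mod modulus (Suc j) \<in> hits_below l (Suc j)"
proof (induction k arbitrary: n)
  case 0 thus ?case by simp
next
  case (Suc k)
  show ?case
  proof (cases "k = j")
    case True
    thus ?thesis using hits_below_less[OF Suc.prems(1)] Suc.prems by simp
  next
    case False
    hence jk: "j < k" using Suc by simp
    hence kl: "l < k" using Suc by simp
    then obtain d r where n: "n = d * modulus k + r" and r: "r \<in> hits_below l k"
      using Suc.prems(1) kl by (auto split: if_splits)
    have dv: "modulus (Suc j) dvd modulus k" using jk by (intro modulus_dvd) simp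
    have "n mod modulus (Suc j) = r mod modulus (Suc j)"
      using dv n by (metis mod_mult_self4 dvd_def mult.assoc mult.commute)
    thus ?thesis using Suc.IH[OF r Suc.prems(2) jk] by simp
  qed
qed

definition far_residue :: "nat \<Rightarrow> nat \<Rightarrow> bool" where
  "far_residue j s \<longleftrightarrow>
     s + modulus (j - 1) \<le> modulus j \<or> (2 * modulus j \<le> s \<and> s + modulus j < modulus (Suc j))"

lemma far_residue_hits_below: "s \<in> hits_below l (Suc j) \<Longrightarrow> l < j \<Longrightarrow> far_residue j s"
proof -
  assume s: "s \<in> hits_below l (Suc j)" and lj: "l < j"
  then obtain d r where sd: "s = d * modulus j + r" and d: "d \<in> digits j"
    and r: "r \<in> hits_below l j"
    by (auto split: if_splits)
  have rb: "r + modulus (j-1) \<le> modulus j" by (rule hits_below_bound[OF r])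
  hence rD: "r < modulus j" using modulus_ge1[of "j-1"] by linarith
  show ?thesis
  proof (cases "d = 0")
    case True thus ?thesis using sd rb by (simp add: far_residue_def)
  next
    case False
    hence d2: "2 \<le> d" "d \<le> radix j - 2" using d by (auto simp: digits_def)
    have "2 * modulus j \<le> d * modulus j" using d2 by (intro mult_right_mono) auto
    hence c1: "2 * modulus j \<le> s" using sd by linarith
    have "(d + 2) * modulus j \<le> radix j * modulus j"
      using d2 radix_ge8[of j] by (intro mult_right_mono) auto
    hence "s + modulus j < modulus (Suc j)" using sd rD by (simp add: algebra_simps modulus_Suc)
    thus ?thesis using c1 by (simp add: far_residue_def)
  qed
qed

lemma far_residue_hits: "n \<in> hits l \<Longrightarrow> l < j \<Longrightarrow> far_residue j (n mod modulus (Suc j))"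
proof -
  assume n: "n \<in> hits l" and lj: "l < j"
  obtain k where k: "Suc j \<le> k" "n \<in> hits_below l k"
    using hits_below_large[OF n, of "Suc j"] by blast
  hence "n mod modulus (Suc j) \<in> hits_below l (Suc j)"
    using hits_below_mod_reduce[OF k(2) lj] by simp
  thus ?thesis using far_residue_hits_below lj by blast
qed

lemma hits_separated_levels:
  assumes n: "n \<in> hits l" and m: "m \<in> hits j" and lj: "l < j"
  shows "int (modulus (j-1)) \<le> \<bar>int n - int m\<bar>"
proof -
  have C: "far_residue j (n mod modulus (Suc j))" by (rule far_residue_hits[OF n lj])
  have t: "m mod modulus (Suc j) = modulus j" by (rule hits_mod[OF m])
  have P: "0 < modulus (Suc j)" using modulus_ge1[of "Suc j"] by simp
  have DD: "modulus (j-1) \<le> modulus j" by (rule modulus_mono) simp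
  have DS: "2 * modulus j \<le> modulus (Suc j)" using modulus_Suc_ge[of j] by simp
  define s where "s = n mod modulus (Suc j)"
  have sl: "s < modulus (Suc j)" using P by (simp add: s_def)
  show ?thesis
  proof (rule mod_separation[OF P refl t])
    show "int (modulus (j-1)) \<le> \<bar>int (n mod modulus (Suc j)) - int (modulus j)\<bar>"
      using C DD unfolding far_residue_def s_def[symmetric] by auto
    show "int (modulus (j-1))
        \<le> int (modulus (Suc j)) - \<bar>int (n mod modulus (Suc j)) - int (modulus j)\<bar>"
      using C DD DS sl unfolding far_residue_def s_def[symmetric] by auto
  qed
qed

lemma hits_disjoint:
  assumes "n \<in> hits l" "n \<in> hits j" "l \<noteq> j"
  shows False
proof -
  { fix l j assume n: "n \<in> hits l" "n \<in> hits j" and lj: "l < j"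
    have "far_residue j (n mod modulus (Suc j))" by (rule far_residue_hits[OF n(1) lj])
    moreover have "n mod modulus (Suc j) = modulus j" by (rule hits_mod[OF n(2)])
    ultimately have False
      using modulus_ge1[of "j-1"] modulus_ge1[of j] by (auto simp: far_residue_def) }
  thus False using assms by (metis nat_neq_iff)
qed

lemma hits_separated_same:
  assumes n: "n \<in> hits l" and m: "m \<in> hits l" and nm: "n < m"
  shows "n + modulus (Suc l) \<le> m"
proof -
  have "n mod modulus (Suc l) = m mod modulus (Suc l)" using hits_mod[OF n] hits_mod[OF m] by simp
  hence "m mod modulus (Suc l) = n mod modulus (Suc l)" by simp
  hence "modulus (Suc l) dvd m - n" using mod_eq_dvd_iff_nat[of n m "modulus (Suc l)"] nm by simp
  moreover have "0 < m - n" using nm by simp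
  ultimately have "modulus (Suc l) \<le> m - n" by (rule dvd_imp_le)
  thus ?thesis using nm by linarith
qed

lemma hits_separated:
  assumes n: "n \<in> hits l" and m: "m \<in> hits j" and nm: "n \<noteq> m"
  shows "int (gap (max l j)) \<le> \<bar>int n - int m\<bar>"
proof -
  consider "l = j" | "l < j" | "j < l" by linarith
  thus ?thesis
  proof cases
    case 1
    have "gap l \<le> gap (Suc (Suc l))" by (rule gap_mono) simp
    also have "\<dots> \<le> modulus (Suc l)" by (rule modulus_ge_gap)
    finally have w: "gap l \<le> modulus (Suc l)" .
    have "int (modulus (Suc l)) \<le> \<bar>int n - int m\<bar>"
      using hits_separated_same[OF n m[unfolded 1[symmetric]]]
        hits_separated_same[OF m[unfolded 1[symmetric]] n] nm
      by linarith
    thus ?thesis using w 1 by simp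
  next
    case 2
    have "gap j \<le> modulus (j-1)" using modulus_ge_gap[of "j-1"] 2 by simp
    thus ?thesis using hits_separated_levels[OF n m 2] 2 by simp
  next
    case 3
    have "gap l \<le> modulus (l-1)" using modulus_ge_gap[of "l-1"] 3 by simp
    thus ?thesis using hits_separated_levels[OF m n 3] 3 by (simp add: abs_minus_commute)
  qed
qed

lemma inj_on_digit_expansion: "inj_on (\<lambda>(d,r). d * modulus k + r) (X \<times> hits_below l k)"
proof (rule inj_onI, clarify)
  fix d r d' r' assume r: "r \<in> hits_below l k" and r': "r' \<in> hits_below l k"
    and eq: "d * modulus k + r = d' * modulus k + r'"
  have rl: "r < modulus k" "r' < modulus k" using hits_below_less r r' by auto
  have "(d * modulus k + r) div modulus k = d" "(d' * modulus k + r') div modulus k = d'"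
    using rl by auto
  hence "d = d'" using eq by simp
  thus "d = d' \<and> r = r'" using eq by simp
qed

lemma card_hits_below_Suc:
  "l < k \<Longrightarrow> card (hits_below l (Suc k)) = card (digits k) * card (hits_below l k)"
proof -
  assume "l < k"
  hence "card (hits_below l (Suc k)) = card ((\<lambda>(d,r). d * modulus k + r) ` (digits k \<times> hits_below l k))"
    by simp
  also have "\<dots> = card (digits k \<times> hits_below l k)" by (rule card_image[OF inj_on_digit_expansion])
  also have "\<dots> = card (digits k) * card (hits_below l k)" by (rule card_cartesian_product)
  finally show ?thesis .
qed

lemma card_digits: "card (digits k) = radix k - 2"
proof -
  have "digits k = {..<radix k} - {1, radix k - 1}" by (auto simp: digits_def)
  moreover have "{1, radix k - 1} \<subseteq> {..<radix k}" using radix_ge8[of k] by auto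
  moreover have "card {1, radix k - 1} = 2" using radix_ge8[of k] by simp
  ultimately show ?thesis by (simp add: card_Diff_subset)
qed

text \<open>The term \<open>1/2\<^sup>k\<close> absorbs the two digits excluded at place \<open>k\<close>, as \<open>radix k \<ge> 2\<^sup>k\<^sup>+\<^sup>3\<close>.\<close>

lemma card_hits_below_lower:
  assumes "Suc l \<le> k"
  shows "real (modulus k) * (1/2 + 1/2^k) \<le> real (card (hits_below l k)) * real (modulus (Suc l))"
  using assms
proof (induction k rule: dec_induct)
  case base
  have "card (hits_below l (Suc l)) = 1" by simp
  moreover have "(1::real)/2^(Suc l) \<le> 1/2"
  proof -
    have "(1::real) \<le> 2^l" by simp
    hence "(2::real) \<le> 2^(Suc l)" by simp
    thus ?thesis by (simp add: frac_le)
  qed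
  hence "1/2 + (1::real)/2^(Suc l) \<le> 1" by linarith
  hence "real (modulus (Suc l)) * (1/2 + 1/2^(Suc l)) \<le> real (modulus (Suc l)) * 1"
    by (intro mult_left_mono) auto
  thus ?case using \<open>card (hits_below l (Suc l)) = 1\<close> by simp
next
  case (step k)
  define p :: real where "p = 2^k"
  have p1: "1 \<le> p" by (simp add: p_def)
  define bb where "bb = real (radix k)"
  have "real (2^(k+3)) \<le> bb" using radix_ge[of k] unfolding bb_def by (rule of_nat_mono)
  moreover have "real (2^(k+3)) = 8 * p" by (simp add: p_def power_add)
  ultimately have bp: "8 * p \<le> bb" by simp
  have key: "bb * (1/2 + 1/(2*p)) \<le> (bb - 2) * (1/2 + 1/p)" by (rule density_factor_step[OF bp p1])
  have lk: "l < k" using step by simp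
  have cG: "real (card (hits_below l (Suc k))) = (bb - 2) * real (card (hits_below l k))"
    using card_hits_below_Suc[OF lk] card_digits[of k] radix_ge8[of k]
      by (simp add: bb_def of_nat_diff)
  have "real (modulus (Suc k)) * (1/2 + 1/2^(Suc k)) = real (modulus k) * (bb * (1/2 + 1/(2*p)))"
    by (simp add: modulus_Suc bb_def p_def algebra_simps)
  also have "\<dots> \<le> real (modulus k) * ((bb - 2) * (1/2 + 1/p))"
    by (rule mult_left_mono[OF key]) simp
  also have "\<dots> = (bb - 2) * (real (modulus k) * (1/2 + 1/2^k))" by (simp add: p_def algebra_simps)
  also have "\<dots> \<le> (bb - 2) * (real (card (hits_below l k)) * real (modulus (Suc l)))"
    using step.IH bp p1 by (intro mult_left_mono) auto
  also have "\<dots> = real (card (hits_below l (Suc k))) * real (modulus (Suc l))" using cG by simp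
  finally show ?case .
qed

lemma card_hits_below_half:
  assumes "l < k"
  shows "real (modulus k) \<le> 2 * real (modulus (Suc l)) * real (card (hits_below l k))"
proof -
  have "real (modulus k) / 2 \<le> real (modulus k) * (1/2 + 1/2^k)"
    by (simp add: algebra_simps)
  also have "\<dots> \<le> real (card (hits_below l k)) * real (modulus (Suc l))"
    using card_hits_below_lower assms by simp
  finally show ?thesis by (simp add: algebra_simps)
qed

lemma hits_below_subset: "hits_below l k \<subseteq> hits l" by (auto simp: hits_def)

lemma exists_modulus_bracket:
  assumes "modulus j \<le> N"
  obtains k where "j \<le> k" "modulus k \<le> N" "N < modulus (Suc k)"
proof -
  have ex: "\<exists>k. N < modulus k"
    using modulus_ge_pow2[of N] less_exp[of N] by (metis le_less_trans less_le_trans)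
  define K where "K = (LEAST k. N < modulus k)"
  have K: "N < modulus K" using LeastI_ex[OF ex] by (simp add: K_def)
  have below: "k < K \<Longrightarrow> modulus k \<le> N" for k
    using not_less_Least[of k "\<lambda>k. N < modulus k"] by (simp add: K_def)
  have "j < K" using modulus_mono[of K j] K assms by (meson le_less_trans not_le)
  then obtain k where "K = Suc k" "j \<le> k" by (cases K) auto
  thus ?thesis using that below[of k] K by simp
qed

lemma card_digits_below: "q < radix k \<Longrightarrow> q \<le> 2 * card {d \<in> digits k. d < q}"
proof -
  assume q: "q < radix k"
  have "{..<q} - {1} \<subseteq> {d \<in> digits k. d < q}" using q by (auto simp: digits_def)
  hence "card ({..<q} - {1}) \<le> card {d \<in> digits k. d < q}" by (rule card_mono[rotated]) simp
  moreover have "q \<le> 2 * card ({..<q} - {1})"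
    by (cases "1 < q") (auto simp: card_Diff_singleton_if)
  ultimately show ?thesis by linarith
qed

lemma card_hits_le_expansions:
  assumes "l < k" and "q * modulus k \<le> N"
  shows "card {d \<in> digits k. d < q} * card (hits_below l k) \<le> card {n. n \<le> N \<and> n \<in> hits l}"
proof -
  define S where "S = (\<lambda>(d, r). d * modulus k + r) ` ({d \<in> digits k. d < q} \<times> hits_below l k)"
  have "S \<subseteq> {n. n \<le> N \<and> n \<in> hits l}"
  proof
    fix n assume "n \<in> S"
    then obtain d r where n: "n = d * modulus k + r" and d: "d \<in> digits k" "d < q"
      and r: "r \<in> hits_below l k"
      by (auto simp: S_def)
    have "n \<in> hits_below l (Suc k)" using assms(1) n d r by auto
    hence "n \<in> hits l" using hits_below_subset by blast
    moreover have "n < (d + 1) * modulus k" using n hits_below_less[OF r] by simp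
    moreover have "(d + 1) * modulus k \<le> q * modulus k" using d by (intro mult_right_mono) auto
    ultimately show "n \<in> {n. n \<le> N \<and> n \<in> hits l}" using assms(2) by simp
  qed
  hence "card S \<le> card {n. n \<le> N \<and> n \<in> hits l}" by (intro card_mono) auto
  moreover have "card S = card {d \<in> digits k. d < q} * card (hits_below l k)"
    unfolding S_def
    by (subst card_image) (auto intro: inj_on_subset[OF inj_on_digit_expansion] simp: card_cartesian_product)
  ultimately show ?thesis by simp
qed

lemma hits_density:
  assumes N: "modulus (Suc l) \<le> N"
  shows "real (N + 1) / (8 * real (modulus (Suc l))) \<le> real (card {n. n \<le> N \<and> n \<in> hits l})"
proof -
  obtain k where k: "Suc l \<le> k" and Dk: "modulus k \<le> N" and "N < modulus (Suc k)"
    by (rule exists_modulus_bracket[OF N])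
  hence lk: "l < k" and NS: "N < radix k * modulus k" by (simp_all add: modulus_Suc)
  define q where "q = N div modulus k"
  have q1: "1 \<le> q" using div_le_mono[OF Dk, of "modulus k"] by (simp add: q_def)
  have qr: "q < radix k" using NS by (simp add: q_def div_less_iff_less_mult)
  have "N + 1 \<le> q * modulus k + modulus k"
    using div_mult_mod_eq[of N "modulus k"] mod_less_divisor[OF modulus_pos[of k], of N]
    unfolding q_def by linarith
  also have "\<dots> \<le> 2 * q * modulus k" using q1 by simp
  finally have "real (N + 1) \<le> 2 * real q * real (modulus k)"
    by (metis of_nat_le_iff of_nat_mult of_nat_numeral)
  also have "\<dots> \<le> 2 * (2 * real (card {d \<in> digits k. d < q}))
      * (2 * real (modulus (Suc l)) * real (card (hits_below l k)))"
    using card_digits_below[OF qr] card_hits_below_half[OF lk]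
    by (intro mult_mono) (auto simp flip: of_nat_mult)
  also have "\<dots> \<le> 8 * real (modulus (Suc l)) * real (card {n. n \<le> N \<and> n \<in> hits l})"
    using card_hits_le_expansions[OF lk, of q N] by (simp add: q_def flip: of_nat_mult)
  finally show ?thesis by (simp add: divide_le_eq mult.commute)
qed

end

section \<open>Dilations of a fixed vector become small\<close>

definition supp_bound :: "(nat \<Rightarrow> complex) \<Rightarrow> nat" where
  "supp_bound y = (LEAST B. \<forall>i\<ge>B. y i = 0)"

lemma supp_bound_eq_0:
  assumes "finite_supp y" "supp_bound y \<le> i"
  shows "y i = 0"
proof -
  obtain B where "\<forall>i\<ge>B. y i = 0" using assms(1) finite_supp_def by auto
  hence "\<forall>i\<ge>supp_bound y. y i = 0" unfolding supp_bound_def by (rule LeastI)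
  thus ?thesis using assms(2) by blast
qed

lemma dilate_eq_sum:
  assumes "supp_ge3 y" "finite_supp y"
  shows "dilate k y t = (\<Sum>i\<in>{3..<supp_bound y}. y i * (if t = i * 2 ^ k then 1 else 0))"
proof (cases "2 ^ k dvd t")
  case True
  then obtain q where q: "t = q * 2 ^ k" by (metis dvdE mult.commute)
  have "(\<Sum>i\<in>{3..<supp_bound y}. y i * (if t = i * 2 ^ k then 1 else 0))
      = (\<Sum>i\<in>{3..<supp_bound y}. if i = q then y q else 0)"
    by (rule sum.cong) (auto simp: q)
  also have "\<dots> = y q"
    using assms supp_bound_eq_0[of y q] by (auto simp: supp_ge3_def)
  finally show ?thesis by (simp add: dilate_def q)
next
  case False
  hence "t \<noteq> i * 2 ^ k" for i by auto
  thus ?thesis using False by (simp add: dilate_def)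
qed

lemma sum_dyadic_indicator:
  assumes "0 < i"
  shows "(\<Sum>k\<in>G \<inter> {..<t}. if t = i * 2 ^ k then 1 else 0 :: complex)
    = (if t \<in> (\<lambda>k. i * 2 ^ k) ` G then 1 else 0)"
proof (cases "t \<in> (\<lambda>k. i * 2 ^ k) ` G")
  case True
  then obtain k0 where k0: "k0 \<in> G" "t = i * 2 ^ k0" by blast
  have "k0 < 2 ^ k0" by (rule less_exp)
  also have "\<dots> \<le> t" using k0(2) assms by simp
  finally have k0t: "k0 < t" .
  have "(\<Sum>k\<in>G \<inter> {..<t}. if t = i * 2 ^ k then 1 else 0 :: complex)
      = (\<Sum>k\<in>G \<inter> {..<t}. if k = k0 then 1 else 0)"
    using k0(2) assms by (intro sum.cong) auto
  also have "\<dots> = 1" using k0 k0t by (simp add: sum.delta)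
  finally show ?thesis using True by simp
next
  case False
  hence "\<forall>k\<in>G \<inter> {..<t}. t \<noteq> i * 2 ^ k" by auto
  thus ?thesis using False by simp
qed

context pos_weight
begin

lemma wnorm_dyadic_indicator_le:
  assumes i: "0 < i" and s: "summable (\<lambda>n. 1 / \<omega> (i * 2 ^ n))" and G: "G \<subseteq> {M..}"
    and A: "finite A" "A \<subseteq> {1..}"
  shows "wnorm \<omega> (\<lambda>t. if t \<in> (\<lambda>k. i * 2 ^ k) ` G then 1 else 0) A
    \<le> sqrt (\<Sum>n. 1 / \<omega> (i * 2 ^ (n + M)))"
proof -
  define f where "f = (\<lambda>n. 1 / \<omega> (i * 2 ^ (n + M)))"
  have sf: "summable f"
    using s summable_iff_shift[of "\<lambda>n. 1 / \<omega> (i * 2 ^ n)" M] by (simp add: f_def)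
  have f0: "0 \<le> f n" for n
    using pos[of "i * 2 ^ (n + M)"] i by (simp add: f_def less_imp_le)
  define KA where "KA = {k\<in>G. i * 2 ^ k \<in> A}"
  have inj: "inj_on (\<lambda>k. i * 2 ^ k) KA" using i by (intro inj_onI) simp
  have "finite ((\<lambda>k. i * 2 ^ k) ` KA)"
    using A(1) by (rule finite_subset[rotated]) (auto simp: KA_def)
  hence fin: "finite KA" using inj by (simp add: finite_image_iff)
  have "(wnorm \<omega> (\<lambda>t. if t \<in> (\<lambda>k. i * 2 ^ k) ` G then 1 else 0) A)\<^sup>2
      = (\<Sum>t\<in>A. if t \<in> (\<lambda>k. i * 2 ^ k) ` G then 1 / \<omega> t else 0)"
    unfolding wnorm_sq[OF A(2)] by (rule sum.cong) auto
  also have "\<dots> = (\<Sum>t\<in>(\<lambda>k. i * 2 ^ k) ` KA. 1 / \<omega> t)"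
    by (simp add: sum.inter_restrict[symmetric, OF A(1)]) (auto intro!: sum.cong simp: KA_def)
  also have "\<dots> = (\<Sum>k\<in>KA. 1 / \<omega> (i * 2 ^ k))" by (simp add: sum.reindex[OF inj])
  also have "\<dots> = (\<Sum>k\<in>KA. f (k - M))" using G by (intro sum.cong) (auto simp: f_def KA_def)
  also have "\<dots> = (\<Sum>n\<in>(\<lambda>k. k - M) ` KA. f n)"
  proof -
    have "inj_on (\<lambda>k. k - M) KA"
    proof (rule inj_onI)
      fix x x' assume "x \<in> KA" "x' \<in> KA" "x - M = x' - M"
      moreover have "M \<le> x" "M \<le> x'" using G \<open>x \<in> KA\<close> \<open>x' \<in> KA\<close> by (auto simp: KA_def)
      ultimately show "x = x'" by linarith
    qed
    thus ?thesis by (simp add: sum.reindex)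
  qed
  also have "\<dots> \<le> suminf f" using fin f0 by (intro sum_le_suminf[OF sf]) auto
  finally show ?thesis unfolding f_def by (rule real_le_rsqrt)
qed

end

locale collatz_weight = lower_bounded_weight +
  assumes summable_dyadic: "\<And>k. 3 \<le> k \<Longrightarrow> summable (\<lambda>n. 1 / \<omega> (k * 2 ^ n))"
begin

definition dilation_tail :: "(nat \<Rightarrow> complex) \<Rightarrow> nat \<Rightarrow> real" where
  "dilation_tail y M = (\<Sum>i\<in>{3..<supp_bound y}. cmod (y i) * sqrt (\<Sum>n. 1 / \<omega> (i * 2 ^ (n + M))))"

lemma dilation_tail_tendsto_0: "(\<lambda>M. dilation_tail y M) \<longlonglongrightarrow> 0"
proof -
  have "(\<lambda>M. \<Sum>i\<in>{3..<supp_bound y}. cmod (y i) * sqrt (\<Sum>n. 1 / \<omega> (i * 2 ^ (n + M))))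
      \<longlonglongrightarrow> (\<Sum>i\<in>{3..<supp_bound y}. cmod (y i) * sqrt 0)"
    using suminf_exist_split2[OF summable_dyadic]
    by (intro tendsto_sum tendsto_mult_left tendsto_real_sqrt) (simp add: power_add mult.assoc)
  thus ?thesis by (simp add: dilation_tail_def)
qed

lemma wnorm_dilate_sum_le:
  assumes y: "supp_ge3 y" "finite_supp y" and G: "G \<subseteq> {M..}" and A: "finite A" "A \<subseteq> {1..}"
  shows "wnorm \<omega> (\<lambda>t. \<Sum>k\<in>G \<inter> {..<t}. dilate k y t) A \<le> dilation_tail y M"
proof -
  define ind where "ind (i :: nat) t = (if t \<in> (\<lambda>k. i * 2 ^ k) ` G then 1 else 0 :: complex)" for i t
  have "(\<Sum>k\<in>G \<inter> {..<t}. dilate k y t) = (\<Sum>i\<in>{3..<supp_bound y}. y i * ind i t)" for t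
  proof -
    have "(\<Sum>k\<in>G \<inter> {..<t}. dilate k y t)
        = (\<Sum>k\<in>G \<inter> {..<t}. \<Sum>i\<in>{3..<supp_bound y}. y i * (if t = i * 2 ^ k then 1 else 0))"
      by (simp add: dilate_eq_sum[OF y])
    also have "\<dots> = (\<Sum>i\<in>{3..<supp_bound y}. y i * (\<Sum>k\<in>G \<inter> {..<t}. if t = i * 2 ^ k then 1 else 0))"
      by (subst sum.swap) (simp add: sum_distrib_left)
    also have "\<dots> = (\<Sum>i\<in>{3..<supp_bound y}. y i * ind i t)"
      by (intro sum.cong) (simp_all add: sum_dyadic_indicator ind_def)
    finally show ?thesis .
  qed
  hence "wnorm \<omega> (\<lambda>t. \<Sum>k\<in>G \<inter> {..<t}. dilate k y t) A
      = wnorm \<omega> (\<lambda>t. \<Sum>i\<in>{3..<supp_bound y}. y i * ind i t) A"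
    by simp
  also have "\<dots> \<le> (\<Sum>i\<in>{3..<supp_bound y}. wnorm \<omega> (\<lambda>t. y i * ind i t) A)"
    by (rule wnorm_sum_le[OF A(2)])
  also have "\<dots> \<le> dilation_tail y M"
    unfolding dilation_tail_def wnorm_mult ind_def
    using G A by (intro sum_mono mult_left_mono wnorm_dyadic_indicator_le summable_dyadic) auto
  finally show ?thesis .
qed

end

section \<open>The coefficients of a frequently hypercyclic vector\<close>

definition coef_sup_bound :: "(nat \<Rightarrow> complex) \<Rightarrow> real" where
  "coef_sup_bound y = (\<Sum>i<supp_bound y. cmod (y i))"

lemma norm_le_coef_sup_bound:
  assumes "finite_supp y"
  shows "cmod (y i) \<le> coef_sup_bound y"
proof (cases "i < supp_bound y")
  case True thus ?thesis unfolding coef_sup_bound_def by (intro member_le_sum) auto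
next
  case False thus ?thesis
    using supp_bound_eq_0[OF assms] by (simp add: coef_sup_bound_def sum_nonneg)
qed

lemma sum_quarter_pow_max_le: "(\<Sum>j<L. (1/4::real) ^ max l j) \<le> 2 * (1/2) ^ l"
proof -
  have "(\<Sum>j<L. (1/4::real) ^ max l j) \<le> (\<Sum>j<L. (1/2) ^ l * (1/2) ^ j)"
  proof (rule sum_mono)
    fix j
    have "(1/4::real) ^ max l j = (1/2) ^ max l j * (1/2) ^ max l j"
      by (simp add: power_mult_distrib[symmetric])
    also have "\<dots> \<le> (1/2) ^ l * (1/2) ^ j" by (intro mult_mono power_decreasing) auto
    finally show "(1/4::real) ^ max l j \<le> (1/2) ^ l * (1/2) ^ j" .
  qed
  also have "\<dots> = (1/2) ^ l * (2 - 2 * (1/2) ^ L)"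
    by (simp add: sum_distrib_left[symmetric]) (induction L, simp_all)
  also have "\<dots> \<le> 2 * (1/2) ^ l" by simp
  finally show ?thesis .
qed

context collatz_weight
begin

definition dense_vec :: "nat \<Rightarrow> nat \<Rightarrow> complex" where
  "dense_vec k = decode (from_nat k)"

text \<open>The targets list every \<^term>\<open>dense_vec k\<close> infinitely often, but only at indices \<open>l\<close> exceeding
  its coefficients; this keeps the coefficients of the final vector polynomially bounded.\<close>

definition target :: "nat \<Rightarrow> nat \<Rightarrow> complex" where
  "target l = (if coef_sup_bound (dense_vec (fst (prod_decode l))) \<le> real l
     then dense_vec (fst (prod_decode l)) else (\<lambda>_. 0))"

lemma eventually_killed_target: "eventually_killed (target l)"
  by (simp add: target_def dense_vec_def eventually_killed_decode eventually_killed_zero)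

lemma finite_supp_target: "finite_supp (target l)"
  using finite_supp_decode[of "from_nat (fst (prod_decode l))"]
  by (auto simp: target_def dense_vec_def finite_supp_def)

lemma supp_ge3_target: "supp_ge3 (target l)"
  using supp_ge3_decode[of "from_nat (fst (prod_decode l))"]
  by (auto simp: target_def dense_vec_def supp_ge3_def)

lemma norm_target_le: "cmod (target l i) \<le> real l"
  using norm_le_coef_sup_bound[OF finite_supp_decode, of "from_nat (fst (prod_decode l))" i]
  by (simp add: target_def dense_vec_def)

lemma target_frequently: "\<exists>l\<ge>L. target l = dense_vec k"
proof -
  define l where "l = prod_encode (k, L + nat \<lceil>coef_sup_bound (dense_vec k)\<rceil>)"
  have le: "L + nat \<lceil>coef_sup_bound (dense_vec k)\<rceil> \<le> l"
    unfolding l_def by (rule le_prod_encode_2)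
  hence "coef_sup_bound (dense_vec k) \<le> real l" by linarith
  hence "target l = dense_vec k" by (simp add: target_def l_def)
  moreover have "L \<le> l" using le by linarith
  ultimately show ?thesis by blast
qed

definition kill_time :: "nat \<Rightarrow> nat" where
  "kill_time l = (LEAST K. (Tcoef ^^ K) (target l) = (\<lambda>_. 0))"

lemma Tcoef_pow_target_eq_0: "kill_time l \<le> K \<Longrightarrow> (Tcoef ^^ K) (target l) = (\<lambda>_. 0)"
  using eventually_killed_target[of l] unfolding eventually_killed_def kill_time_def
  by (metis (mono_tags, lifting) LeastI Tcoef_pow_eq_0_mono)

definition tail_time :: "nat \<Rightarrow> nat" where
  "tail_time j = (SOME M. \<forall>M'\<ge>M. \<forall>l\<le>j. dilation_tail (target l) M' \<le> (1/4) ^ j)"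

lemma dilation_tail_target_le:
  assumes "tail_time j \<le> M" "l \<le> j"
  shows "dilation_tail (target l) M \<le> (1/4) ^ j"
proof -
  have "\<forall>l\<in>{..j}. eventually (\<lambda>M. dilation_tail (target l) M < (1/4) ^ j) sequentially"
    using order_tendstoD(2)[OF dilation_tail_tendsto_0] by simp
  hence "eventually (\<lambda>M. \<forall>l\<in>{..j}. dilation_tail (target l) M < (1/4) ^ j) sequentially"
    by (rule eventually_ball_finite[rotated]) simp
  hence "\<exists>M. \<forall>M'\<ge>M. \<forall>l\<le>j. dilation_tail (target l) M' \<le> (1/4) ^ j"
    unfolding eventually_sequentially by (meson atMost_iff less_imp_le)
  from someI_ex[OF this] show ?thesis using assms unfolding tail_time_def by blast
qed

definition gap :: "nat \<Rightarrow> nat" where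
  "gap j = (\<Sum>i\<le>j. tail_time i + kill_time i)"

lemma gap_mono: "i \<le> j \<Longrightarrow> gap i \<le> gap j"
  unfolding gap_def by (rule sum_mono2) auto

lemma tail_time_le_gap: "tail_time j \<le> gap j" and kill_time_le_gap: "kill_time j \<le> gap j"
  using member_le_sum[of j "{..j}" "\<lambda>i. tail_time i + kill_time i"] by (auto simp: gap_def)

sublocale sep: separated_sets gap
  by unfold_locales (rule gap_mono)

definition level :: "nat \<Rightarrow> nat" where
  "level n = (THE l. n \<in> sep.hits l)"

lemma level_eq: "n \<in> sep.hits l \<Longrightarrow> level n = l"
  unfolding level_def using sep.hits_disjoint by blast

lemma level_le: "n \<in> sep.hits l \<Longrightarrow> l \<le> n"
  using less_exp[of l] sep.modulus_ge_pow2[of l] sep.hits_ge[of n l] by linarith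

definition block :: "nat \<Rightarrow> nat \<Rightarrow> complex" where
  "block n = (if \<exists>l. n \<in> sep.hits l then target (level n) else (\<lambda>_. 0))"

lemma block_eq_target: "n \<in> sep.hits l \<Longrightarrow> block n = target l"
  using level_eq by (auto simp: block_def)

lemma supp_ge3_block: "supp_ge3 (block n)"
  using supp_ge3_target by (auto simp: block_def supp_ge3_def)

lemma norm_block_le: "cmod (block n i) \<le> real n"
proof (cases "\<exists>l. n \<in> sep.hits l")
  case True
  then obtain l where l: "n \<in> sep.hits l" by blast
  have "cmod (block n i) \<le> real l" using norm_target_le block_eq_target[OF l] by simp
  also have "\<dots> \<le> real n" using level_le[OF l] by simp
  finally show ?thesis .
qed (simp add: block_def)

lemma block_0: "block 0 = (\<lambda>_. 0)"
proof -
  have "0 \<notin> sep.hits l" for l using sep.hits_ge[of 0 l] sep.modulus_pos[of l] by linarith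
  thus ?thesis by (simp add: block_def)
qed

lemma block_eq_sum:
  assumes "n < L"
  shows "block n = (\<lambda>i. \<Sum>l<L. if n \<in> sep.hits l then target l i else 0)"
proof (cases "\<exists>l. n \<in> sep.hits l")
  case True
  then obtain l where l: "n \<in> sep.hits l" by blast
  have "l < L" using level_le[OF l] assms by simp
  moreover have "n \<in> sep.hits l' \<longleftrightarrow> l' = l" for l' using l sep.hits_disjoint by blast
  ultimately show ?thesis using block_eq_target[OF l] by (simp add: sum.delta cong: if_cong)
next
  case False thus ?thesis by (simp add: block_def)
qed

text \<open>Only the terms \<open>n < t\<close> of \<open>\<Sum>\<^sub>n dilate n (block n)\<close> are nonzero at index \<open>t\<close>.\<close>

definition fhc_coef :: "nat \<Rightarrow> complex" where
  "fhc_coef t = (\<Sum>n<t. dilate n (block n) t)"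

lemma fhc_coef_eq_sum:
  assumes "t \<le> K"
  shows "fhc_coef t = (\<Sum>n<K. dilate n (block n) t)"
  unfolding fhc_coef_def using assms
  by (intro sum.mono_neutral_left) (auto intro: dilate_eq_0_if_le[OF supp_ge3_block])

lemma Tcoef_pow_fhc_coef:
  assumes "2 ^ m * t \<le> K"
  shows "(Tcoef ^^ m) fhc_coef t = (\<Sum>n<K. (Tcoef ^^ m) (dilate n (block n)) t)"
proof -
  have "(Tcoef ^^ m) fhc_coef t = (\<Sum>i\<in>collatz_pre_pow m t. \<Sum>n<K. dilate n (block n) i)"
    unfolding Tcoef_pow_eq_sum
    by (intro sum.cong refl fhc_coef_eq_sum) (use collatz_pre_pow_le assms in fastforce)
  also have "\<dots> = (\<Sum>n<K. (Tcoef ^^ m) (dilate n (block n)) t)"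
    by (subst sum.swap) (simp add: Tcoef_pow_eq_sum)
  finally show ?thesis .
qed

lemma Tcoef_pow_fhc_coef_eq_dilate_sum:
  assumes killed: "\<And>n. n < m \<Longrightarrow> (Tcoef ^^ (m - n)) (block n) = (\<lambda>_. 0)"
  shows "(Tcoef ^^ m) fhc_coef t = (\<Sum>k<t. dilate k (block (m + k)) t)"
proof -
  define K where "K = 2 ^ m * t + m + t"
  have "(Tcoef ^^ m) (dilate n (block n)) t = (if n < m then 0 else dilate (n - m) (block n) t)" for n
    using Tcoef_pow_dilate_ge[OF supp_ge3_block, of n m] Tcoef_pow_dilate[OF supp_ge3_block, of m n] killed
    by (cases "n < m") simp_all
  hence "(Tcoef ^^ m) fhc_coef t = (\<Sum>n<K. if n < m then 0 else dilate (n - m) (block n) t)"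
    using Tcoef_pow_fhc_coef[of m t K] by (simp add: K_def)
  also have "\<dots> = (\<Sum>n\<in>{m..<K}. dilate (n - m) (block n) t)"
    by (intro sum.mono_neutral_cong_right) auto
  also have "\<dots> = (\<Sum>k\<in>{0..<K - m}. dilate k (block (m + k)) t)"
    by (rule sum.reindex_bij_witness[of _ "\<lambda>k. m + k" "\<lambda>n. n - m"]) (auto simp: K_def)
  also have "\<dots> = (\<Sum>k\<in>{0..<t}. dilate k (block (m + k)) t)"
    using dilate_eq_0_if_le[OF supp_ge3_block]
    by (intro sum.mono_neutral_right) (auto simp: K_def)
  finally show ?thesis by (simp add: atLeast0LessThan)
qed

definition later_hits :: "nat \<Rightarrow> nat \<Rightarrow> nat set" where
  "later_hits m l = {k. 1 \<le> k \<and> m + k \<in> sep.hits l}"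

lemma dilate_sum_eq_later_hits:
  assumes "m + t < L"
  shows "(\<Sum>k<t. dilate k (block (m + k)) t)
    = block m t + (\<Sum>l<L. \<Sum>k\<in>later_hits m l \<inter> {..<t}. dilate k (target l) t)"
proof (cases t)
  case 0 thus ?thesis using dilate_eq_0_if_le[OF supp_ge3_block, of 0 0 m] by (simp add: dilate_def)
next
  case (Suc t')
  have "{..<t} = insert 0 {1..<t}" using Suc by auto
  hence "(\<Sum>k<t. dilate k (block (m + k)) t) = block m t + (\<Sum>k\<in>{1..<t}. dilate k (block (m + k)) t)"
    by (simp add: dilate_def)
  also have "(\<Sum>k\<in>{1..<t}. dilate k (block (m + k)) t)
      = (\<Sum>k\<in>{1..<t}. \<Sum>l<L. if m + k \<in> sep.hits l then dilate k (target l) t else 0)"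
  proof (rule sum.cong[OF refl])
    fix k assume "k \<in> {1..<t}"
    hence "block (m + k) = (\<lambda>i. \<Sum>l<L. if m + k \<in> sep.hits l then target l i else 0)"
      using assms by (intro block_eq_sum) simp
    thus "dilate k (block (m + k)) t = (\<Sum>l<L. if m + k \<in> sep.hits l then dilate k (target l) t else 0)"
      by (cases "2 ^ k dvd t") (simp_all add: dilate_def cong: if_cong)
  qed
  also have "\<dots> = (\<Sum>l<L. \<Sum>k\<in>{k\<in>{1..<t}. m + k \<in> sep.hits l}. dilate k (target l) t)"
    by (subst sum.swap) (intro sum.cong refl sum.inter_filter[symmetric], simp)
  also have "\<dots> = (\<Sum>l<L. \<Sum>k\<in>later_hits m l \<inter> {..<t}. dilate k (target l) t)"
    by (intro sum.cong refl arg_cong[where f = "\<lambda>A. sum _ A"]) (auto simp: later_hits_def)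
  finally show ?thesis .
qed

lemma wnorm_Tcoef_pow_fhc_coef_err:
  assumes killed: "\<And>n. n < m \<Longrightarrow> (Tcoef ^^ (m - n)) (block n) = (\<lambda>_. 0)"
    and far: "\<And>j k. k \<in> later_hits m j \<Longrightarrow> gap (max l j) \<le> k"
  shows "wnorm \<omega> (\<lambda>t. (Tcoef ^^ m) fhc_coef t - block m t) {1..<K} \<le> 2 * (1/2) ^ l"
proof -
  define L where "L = m + K + 1"
  have "wnorm \<omega> (\<lambda>t. (Tcoef ^^ m) fhc_coef t - block m t) {1..<K}
      = wnorm \<omega> (\<lambda>t. \<Sum>j<L. \<Sum>k\<in>later_hits m j \<inter> {..<t}. dilate k (target j) t) {1..<K}"
  proof (rule wnorm_cong)
    fix t assume "t \<in> {1..<K}"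
    hence "m + t < L" by (simp add: L_def)
    thus "(Tcoef ^^ m) fhc_coef t - block m t
        = (\<Sum>j<L. \<Sum>k\<in>later_hits m j \<inter> {..<t}. dilate k (target j) t)"
      by (simp add: Tcoef_pow_fhc_coef_eq_dilate_sum[OF killed] dilate_sum_eq_later_hits)
  qed
  also have "\<dots> \<le> (\<Sum>j<L. wnorm \<omega> (\<lambda>t. \<Sum>k\<in>later_hits m j \<inter> {..<t}. dilate k (target j) t) {1..<K})"
    by (rule wnorm_sum_le) auto
  also have "\<dots> \<le> (\<Sum>j<L. dilation_tail (target j) (gap (max l j)))"
    using far by (intro sum_mono wnorm_dilate_sum_le supp_ge3_target finite_supp_target) auto
  also have "\<dots> \<le> (\<Sum>j<L. (1/4) ^ max l j)"
    by (intro sum_mono dilation_tail_target_le) (auto intro: order_trans[OF tail_time_le_gap])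
  also have "\<dots> \<le> 2 * (1/2) ^ l" by (rule sum_quarter_pow_max_le)
  finally show ?thesis .
qed

lemma wnorm_fhc_coef_le: "wnorm \<omega> fhc_coef {1..<K} \<le> 2"
proof -
  have "gap (max 0 j) \<le> k" if "k \<in> later_hits 0 j" for j k
  proof -
    have "gap j \<le> gap (Suc j)" by (rule gap_mono) simp
    also have "\<dots> \<le> sep.modulus j" by (rule sep.modulus_ge_gap)
    also have "\<dots> \<le> k" using that sep.hits_ge by (auto simp: later_hits_def)
    finally show ?thesis by simp
  qed
  thus ?thesis using wnorm_Tcoef_pow_fhc_coef_err[of 0 0 K] by (simp add: block_0)
qed

lemma supp_ge3_fhc_coef: "supp_ge3 fhc_coef"
proof -
  have "dilate n (block n) t = 0" if "t < 3" for n t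
  proof (rule ccontr)
    assume "dilate n (block n) t \<noteq> 0"
    hence "3 * 2 ^ n \<le> t" by (rule dilate_nonzero_ge[OF supp_ge3_block])
    moreover have "3 \<le> 3 * (2::nat) ^ n" by simp
    ultimately show False using that by linarith
  qed
  thus ?thesis by (simp add: supp_ge3_def fhc_coef_def)
qed

lemma wsummable_fhc_coef: "wsummable \<omega> fhc_coef"
  using wsummable_seq_norm_le(1)[OF _ wnorm_fhc_coef_le] supp_ge3_fhc_coef
    by (simp add: supp_ge3_def)

lemma norm_fhc_coef_le: "cmod (fhc_coef t) \<le> real t * real t"
proof -
  have "cmod (fhc_coef t) \<le> (\<Sum>n<t. cmod (dilate n (block n) t))"
    unfolding fhc_coef_def by (rule norm_sum)
  also have "\<dots> \<le> (\<Sum>n<t. real t)"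
  proof (rule sum_mono)
    fix n assume "n \<in> {..<t}"
    have "cmod (dilate n (block n) t) \<le> real n" using norm_block_le by (simp add: dilate_def)
    thus "cmod (dilate n (block n) t) \<le> real t" using \<open>n \<in> {..<t}\<close> by simp
  qed
  finally show ?thesis by simp
qed

lemma wnorm_Tcoef_pow_fhc_coef_near_target:
  assumes m: "m \<in> sep.hits l"
  shows "wnorm \<omega> (\<lambda>t. (Tcoef ^^ m) fhc_coef t - target l t) {1..<K} \<le> 2 * (1/2) ^ l"
proof -
  have "(Tcoef ^^ (m - n)) (block n) = (\<lambda>_. 0)" if "n < m" for n
  proof (cases "\<exists>j. n \<in> sep.hits j")
    case True
    then obtain j where n: "n \<in> sep.hits j" by blast
    have "int (gap (max j l)) \<le> \<bar>int n - int m\<bar>" using sep.hits_separated[OF n m] that by simp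
    hence "gap j \<le> m - n" using that gap_mono[of j "max j l"] by linarith
    hence "kill_time j \<le> m - n" using kill_time_le_gap[of j] by linarith
    thus ?thesis using Tcoef_pow_target_eq_0 block_eq_target[OF n] by simp
  qed (simp add: block_def)
  moreover have "gap (max l j) \<le> k" if "k \<in> later_hits m j" for j k
    using sep.hits_separated[OF m, of "m + k" j] that by (auto simp: later_hits_def)
  ultimately show ?thesis using wnorm_Tcoef_pow_fhc_coef_err[of m l K] block_eq_target[OF m] by simp
qed

end

section \<open>From coefficient sequences to holomorphic functions\<close>

lemma power_series_on_disc:
  assumes "\<forall>z\<in>ball 0 1. summable (\<lambda>n. a n * z ^ n)"
  shows "(\<lambda>z. \<Sum>n. a n * z ^ n) holomorphic_on ball 0 1" "coef (\<lambda>z. \<Sum>n. a n * z ^ n) = a"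
proof -
  define F where "F = Abs_fps a"
  have "fps_conv_radius F \<ge> 1" unfolding fps_conv_radius_def F_def
    by (rule conv_radius_geI_ex') (use assms in auto)
  hence sub: "ball 0 1 \<subseteq> eball 0 (fps_conv_radius F)"
    by (auto simp: subset_eq dist_norm intro: less_le_trans[of _ 1])
  have ev: "eval_fps F = (\<lambda>z. \<Sum>n. a n * z ^ n)" by (simp add: eval_fps_def F_def fun_eq_iff)
  show "(\<lambda>z. \<Sum>n. a n * z ^ n) holomorphic_on ball 0 1"
    using holomorphic_on_eval_fps[OF sub] ev by simp
  have "fps_conv_radius F > 0" using \<open>fps_conv_radius F \<ge> 1\<close> by (rule less_le_trans[rotated]) simp
  hence "eval_fps F has_fps_expansion F" by (rule eval_fps_has_fps_expansion)
  hence "fps_nth F n = (deriv ^^ n) (eval_fps F) 0 / fact n" for n by (rule fps_nth_fps_expansion)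
  hence "coef (eval_fps F) n = a n" for n by (simp add: coef_def F_def)
  thus "coef (\<lambda>z. \<Sum>n. a n * z ^ n) = a" unfolding ev by (simp add: fun_eq_iff)
qed

lemma coef_sums:
  assumes "f holomorphic_on ball 0 1" "z \<in> ball 0 1"
  shows "(\<lambda>n. coef f n * z ^ n) sums f z"
  using holomorphic_power_series[OF assms] by (simp add: coef_def)

lemma coef_diff:
  assumes "f holomorphic_on ball 0 1" "g holomorphic_on ball 0 1"
  shows "coef (\<lambda>z. f z - g z) n = coef f n - coef g n"
  using higher_deriv_diff[OF assms, of 0 n] by (simp add: coef_def diff_divide_distrib)

text \<open>Coefficients of a function on the disc are \<open>O(\<rho>\<^sup>-\<^sup>j)\<close> for every \<open>\<rho> < 1\<close>, and
  \<open>Tcoef\<close> only reads coefficients of index \<open>\<le> 2m\<close>; taking \<open>\<rho>\<^sup>2 > |z|\<close> gives a geometric majorant.\<close>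

lemma summable_Tcoef_power_series:
  assumes hol: "f holomorphic_on ball 0 1" and z: "z \<in> ball 0 1"
  shows "summable (\<lambda>m. Tcoef (coef f) m * z ^ m)"
proof -
  define \<rho> where "\<rho> = sqrt ((1 + norm z) / 2)"
  have nz: "norm z < 1" using z by simp
  have \<rho>0: "0 < \<rho>" by (simp add: \<rho>_def add_pos_nonneg)
  have \<rho>1: "\<rho> < 1" using real_sqrt_less_mono[of "(1 + norm z) / 2" 1] nz by (simp add: \<rho>_def)
  have zr: "norm z < \<rho> ^ 2" using nz by (simp add: \<rho>_def add_nonneg_nonneg)
  have "summable (\<lambda>n. coef f n * complex_of_real \<rho> ^ n)"
    using coef_sums[OF hol, of "complex_of_real \<rho>"] \<rho>0 \<rho>1 sums_summable by simp
  hence "Bseq (\<lambda>n. coef f n * complex_of_real \<rho> ^ n)"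
    by (intro convergent_imp_Bseq) (auto dest: summable_LIMSEQ_zero simp: convergent_def)
  then obtain B where B0: "0 < B" and B: "\<And>n. norm (coef f n * complex_of_real \<rho> ^ n) \<le> B"
    by (rule BseqE) blast
  have coef_le: "cmod (coef f j) \<le> B / \<rho> ^ (2 * m)" if "j \<le> 2 * m" for j m
  proof -
    have "cmod (coef f j) * \<rho> ^ j \<le> B" using B[of j] \<rho>0 by (simp add: norm_mult norm_power)
    hence "cmod (coef f j) \<le> B / \<rho> ^ j" using \<rho>0 by (simp add: field_simps)
    also have "\<dots> \<le> B / \<rho> ^ (2 * m)"
      using that \<rho>0 \<rho>1 B0 by (intro divide_left_mono power_decreasing) auto
    finally show ?thesis .
  qed
  define q where "q = norm z / \<rho> ^ 2"
  have q: "0 \<le> q" "q < 1" using zr \<rho>0 by (auto simp: q_def)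
  have "norm (Tcoef (coef f) m * z ^ m) \<le> 2 * B * q ^ m" for m
  proof -
    have "norm (Tcoef (coef f) m * z ^ m) \<le> (B / \<rho> ^ (2 * m) + B / \<rho> ^ (2 * m)) * norm z ^ m"
      unfolding norm_mult norm_power
      by (intro mult_right_mono order_trans[OF norm_Tcoef_le] add_mono coef_le) auto
    also have "\<dots> = 2 * B * q ^ m"
      using \<rho>0 power_mult[of \<rho> 2 m] by (simp add: q_def power_divide field_simps)
    finally show ?thesis .
  qed
  moreover have "summable (\<lambda>m. 2 * B * q ^ m)"
    using q by (intro summable_mult summable_geometric) simp
  ultimately show ?thesis by (rule summable_comparison_test'[rotated])
qed

lemma
  assumes "f holomorphic_on ball 0 1"
  shows Top_holomorphic: "Top f holomorphic_on ball 0 1"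
    and coef_Top: "coef (Top f) = Tcoef (coef f)"
  using power_series_on_disc[of "Tcoef (coef f)"] summable_Tcoef_power_series[OF assms]
  by (simp_all add: Top_def)

lemma coef_Top_pow:
  assumes "Top_bounded \<omega>" "inX \<omega> f"
  shows "inX \<omega> ((Top ^^ m) f) \<and> coef ((Top ^^ m) f) = (Tcoef ^^ m) (coef f)"
proof (induction m)
  case (Suc m)
  hence "inX \<omega> ((Top ^^ m) f)" by simp
  thus ?case using Suc assms(1) coef_Top[of "(Top ^^ m) f"] by (auto simp: Top_bounded_def inX_def)
qed (use assms in simp)

lemma conv_radius_square: "conv_radius (\<lambda>n. (real n + 1) ^ 2) = 1"
proof (rule conv_radius_ratio_limit_nonzero[of 1 1])
  have "(\<lambda>n. (real n + 1) ^ 2 / (real n + 2) ^ 2) \<longlonglongrightarrow> 1" by real_asymp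
  thus "(\<lambda>n. norm ((real n + 1) ^ 2) / norm ((real (Suc n) + 1) ^ 2)) \<longlonglongrightarrow> 1"
    by (simp add: add.commute)
qed auto

lemma summable_quadratic_power_series:
  assumes c: "\<And>t. cmod (c t) \<le> real t * real t" and z: "z \<in> ball 0 1"
  shows "summable (\<lambda>t. c t * z ^ t)"
proof (rule summable_comparison_test')
  show "summable (\<lambda>n. (real n + 1) ^ 2 * norm z ^ n)"
    using summable_in_conv_radius[of "norm z" "\<lambda>n. (real n + 1) ^ 2"] conv_radius_square z by simp
  show "norm (c n * z ^ n) \<le> (real n + 1) ^ 2 * norm z ^ n" for n
    unfolding norm_mult norm_power
    by (intro mult_right_mono order_trans[OF c]) (auto simp: power2_eq_square intro!: mult_mono)
qed

section \<open>Frequent hypercyclicity\<close>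

lemma Liminf_density_pos:
  assumes c: "0 < c" and dense: "\<And>N. N0 \<le> N \<Longrightarrow> c * real (N + 1) \<le> real (card {n. n \<le> N \<and> P n})"
  shows "Liminf sequentially (\<lambda>N. ereal (real (card {n. n \<le> N \<and> P n}) / real (N + 1))) > 0"
proof -
  have "eventually (\<lambda>N. ereal c \<le> ereal (real (card {n. n \<le> N \<and> P n}) / real (N + 1))) sequentially"
    unfolding eventually_sequentially using dense by (auto simp: field_simps)
  hence "ereal c \<le> Liminf sequentially (\<lambda>N. ereal (real (card {n. n \<le> N \<and> P n}) / real (N + 1)))"
    by (rule Liminf_bounded)
  moreover have "0 < ereal c" using c by simp
  ultimately show ?thesis by (rule less_le_trans[rotated])
qed

context collatz_weight
begin

definition fhc_vec :: "complex \<Rightarrow> complex" where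
  "fhc_vec = (\<lambda>z. \<Sum>n. fhc_coef n * z ^ n)"

lemma
  shows fhc_vec_holomorphic: "fhc_vec holomorphic_on ball 0 1"
    and coef_fhc_vec: "coef fhc_vec = fhc_coef"
  using power_series_on_disc[of fhc_coef] summable_quadratic_power_series[OF norm_fhc_coef_le]
  by (simp_all add: fhc_vec_def)

lemma inX_fhc_vec: "inX \<omega> fhc_vec"
  using fhc_vec_holomorphic supp_ge3_fhc_coef wsummable_fhc_coef by (simp add: inX_iff coef_fhc_vec)

lemma Top_pow_fhc_vec_near:
  assumes T: "Top_bounded \<omega>" and u: "inX \<omega> u" and e: "0 < e"
  obtains l where "\<And>m. m \<in> sep.hits l \<Longrightarrow> normX \<omega> (\<lambda>z. (Top ^^ m) fhc_vec z - u z) < e"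
proof -
  have a: "supp_ge3 (coef u)" "wsummable \<omega> (coef u)" using u by (simp_all add: inX_iff)
  obtain cd where cd: "\<And>K. wnorm \<omega> (\<lambda>i. decode cd i - coef u i) {1..<K} \<le> e / 4"
    using decode_dense[OF a, of "e / 4"] e by auto
  obtain L where L: "(1/2::real) ^ L < e / 4" using real_arch_pow_inv[of "e / 4" "1/2"] e by auto
  obtain l where "L \<le> l" and l: "target l = decode cd"
    using target_frequently[of L "to_nat cd"] by (auto simp: dense_vec_def)
  have "(1/2::real) ^ l \<le> (1/2) ^ L" using \<open>L \<le> l\<close> by (intro power_decreasing) auto
  hence small: "2 * (1/2::real) ^ l < e / 2" using L by linarith
  have "normX \<omega> (\<lambda>z. (Top ^^ m) fhc_vec z - u z) < e" if m: "m \<in> sep.hits l" for m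
  proof -
    define g where "g = (Top ^^ m) fhc_vec"
    have g: "inX \<omega> g" "coef g = (Tcoef ^^ m) fhc_coef"
      using coef_Top_pow[OF T inX_fhc_vec, of m] by (simp_all add: g_def coef_fhc_vec)
    have diff: "coef (\<lambda>z. g z - u z) = (\<lambda>i. (Tcoef ^^ m) fhc_coef i - coef u i)"
      using coef_diff[of g u] g u by (auto simp: inX_def fun_eq_iff)
    have "wnorm \<omega> (\<lambda>i. (Tcoef ^^ m) fhc_coef i - coef u i) {1..<K} \<le> 2 * (1/2) ^ l + e / 4" for K
    proof -
      have "wnorm \<omega> (\<lambda>i. (Tcoef ^^ m) fhc_coef i - coef u i) {1..<K}
          \<le> wnorm \<omega> (\<lambda>i. (Tcoef ^^ m) fhc_coef i - target l i) {1..<K}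
            + wnorm \<omega> (\<lambda>i. target l i - coef u i) {1..<K}"
        by (rule wnorm_triangle) auto
      also have "\<dots> \<le> 2 * (1/2) ^ l + e / 4"
        using wnorm_Tcoef_pow_fhc_coef_near_target[OF m, of K] cd[of K] l by (intro add_mono) auto
      finally show ?thesis .
    qed
    moreover have "(Tcoef ^^ m) fhc_coef 0 - coef u 0 = 0"
      using g u by (auto simp: inX_def dest: fun_cong[of _ _ 0])
    ultimately have "seq_norm \<omega> (coef (\<lambda>z. g z - u z)) \<le> 2 * (1/2) ^ l + e / 4"
      unfolding diff by (intro wsummable_seq_norm_le(2)) auto
    hence "seq_norm \<omega> (coef (\<lambda>z. g z - u z)) < e" using small e by linarith
    thus ?thesis by (simp add: normX_eq_seq_norm g_def)
  qed
  thus ?thesis by (rule that)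
qed

lemma freq_hypercyclic_if_Top_bounded:
  assumes T: "Top_bounded \<omega>"
  shows "freq_hypercyclic \<omega>"
  unfolding freq_hypercyclic_def
proof (intro exI conjI allI impI)
  show "inX \<omega> fhc_vec" by (rule inX_fhc_vec)
  fix U assume U: "openX \<omega> U \<and> U \<noteq> {}"
  then obtain u where "u \<in> U" by blast
  then obtain e where e: "0 < e" and ball: "\<And>g. inX \<omega> g \<Longrightarrow> normX \<omega> (\<lambda>z. g z - u z) < e \<Longrightarrow> g \<in> U"
    and u: "inX \<omega> u"
    using U unfolding openX_def by blast
  obtain l where near: "\<And>m. m \<in> sep.hits l \<Longrightarrow> normX \<omega> (\<lambda>z. (Top ^^ m) fhc_vec z - u z) < e"
    using Top_pow_fhc_vec_near[OF T u e] by blast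
  have hits_in_U: "m \<in> sep.hits l \<Longrightarrow> (Top ^^ m) fhc_vec \<in> U" for m
    using ball near coef_Top_pow[OF T inX_fhc_vec] by blast
  show "Liminf sequentially (\<lambda>N. ereal (real (card {n. n \<le> N \<and> (Top ^^ n) fhc_vec \<in> U}) / real (N + 1))) > 0"
  proof (rule Liminf_density_pos)
    show "0 < 1 / (8 * real (sep.modulus (Suc l)))" by simp
    fix N assume N: "sep.modulus (Suc l) \<le> N"
    have "real (card {n. n \<le> N \<and> n \<in> sep.hits l}) \<le> real (card {n. n \<le> N \<and> (Top ^^ n) fhc_vec \<in> U})"
      using hits_in_U by (intro of_nat_mono card_mono) auto
    thus "1 / (8 * real (sep.modulus (Suc l))) * real (N + 1) \<le> real (card {n. n \<le> N \<and> (Top ^^ n) fhc_vec \<in> U})"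
      using sep.hits_density[OF N] by simp
  qed
qed

end

section \<open>The weight \<open>\<omega>\<^sub>0\<close>\<close>

lemma \<omega>0_pos: "0 < \<omega>0 n"
  by (simp add: \<omega>0_def)

lemma \<omega>0_ge: "1 / pi \<le> \<omega>0 n"
  by (simp add: \<omega>0_def divide_right_mono)

lemma summable_inverse_\<omega>0_dyadic:
  assumes "1 \<le> k"
  shows "summable (\<lambda>n. 1 / \<omega>0 (k * 2 ^ n))"
proof (rule summable_comparison_test')
  show "summable (\<lambda>n. pi * (1/2::real) ^ n)" by (intro summable_mult summable_geometric) simp
  show "norm (1 / \<omega>0 (k * 2 ^ n)) \<le> pi * (1/2) ^ n" for n
  proof -
    have "(2::real) ^ n \<le> real k * 2 ^ n + 1"
      using assms by (simp add: mult_right_mono add_increasing2)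
    hence "pi / (real k * 2 ^ n + 1) \<le> pi / 2 ^ n"
      by (intro divide_left_mono) (auto intro!: mult_pos_pos add_nonneg_pos)
    thus ?thesis by (simp add: \<omega>0_def power_one_over)
  qed
qed

lemma \<omega>0_collatz_pre_le: "j \<in> collatz_pre m \<Longrightarrow> \<omega>0 j \<le> 2 * \<omega>0 m"
  using collatz_pre_le[of j m] by (simp add: \<omega>0_def divide_right_mono)

lemma Tcoef_wterm_le:
  "(cmod (Tcoef a m))\<^sup>2 / \<omega>0 m \<le> 4 * (\<Sum>j\<in>collatz_pre m. (cmod (a j))\<^sup>2 / \<omega>0 j)"
proof (cases "m < 3")
  case True thus ?thesis by (simp add: Tcoef_eq_sum sum_nonneg \<omega>0_pos less_imp_le)
next
  case False
  have "(cmod (Tcoef a m))\<^sup>2 \<le> (\<Sum>j\<in>collatz_pre m. cmod (a j))\<^sup>2"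
    by (intro power_mono) (auto simp: Tcoef_eq_sum False norm_sum)
  also have "\<dots> \<le> (\<Sum>j\<in>collatz_pre m. (cmod (a j))\<^sup>2) * card (collatz_pre m)"
    by (rule sum_squared_le_sum_of_squares)
  also have "\<dots> \<le> (\<Sum>j\<in>collatz_pre m. (cmod (a j))\<^sup>2) * 2"
    using card_collatz_pre_le[of m] by (intro mult_left_mono) (auto simp: sum_nonneg)
  finally have "(cmod (Tcoef a m))\<^sup>2 / \<omega>0 m \<le> 2 * (\<Sum>j\<in>collatz_pre m. (cmod (a j))\<^sup>2 / \<omega>0 m)"
    using \<omega>0_pos[of m] by (simp add: divide_right_mono sum_divide_distrib[symmetric] mult.commute)
  also have "\<dots> \<le> 2 * (\<Sum>j\<in>collatz_pre m. 2 * ((cmod (a j))\<^sup>2 / \<omega>0 j))"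
  proof (intro mult_left_mono sum_mono)
    fix j assume "j \<in> collatz_pre m"
    hence "1 / \<omega>0 m \<le> 2 / \<omega>0 j"
      using \<omega>0_collatz_pre_le \<omega>0_pos[of j] \<omega>0_pos[of m] by (simp add: divide_simps)
    hence "(cmod (a j))\<^sup>2 * (1 / \<omega>0 m) \<le> (cmod (a j))\<^sup>2 * (2 / \<omega>0 j)"
      by (rule mult_left_mono) simp
    thus "(cmod (a j))\<^sup>2 / \<omega>0 m \<le> 2 * ((cmod (a j))\<^sup>2 / \<omega>0 j)" by (simp add: ac_simps)
  qed simp
  finally show ?thesis by (simp add: sum_distrib_left)
qed

interpretation \<omega>0: pos_weight \<omega>0
  by unfold_locales (rule \<omega>0_pos)

lemma Top_bounded_\<omega>0: "Top_bounded \<omega>0"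
  unfolding Top_bounded_def
proof (intro exI allI impI conjI)
  fix f assume f: "inX \<omega>0 f"
  define a where "a = coef f"
  have hol: "f holomorphic_on ball 0 1" and s: "wsummable \<omega>0 a"
    using f by (simp_all add: inX_iff a_def)
  define g where "g i = (cmod (a i))\<^sup>2 / \<omega>0 i" for i
  have g0: "0 \<le> g i" for i by (simp add: g_def \<omega>0_pos less_imp_le)
  have sg: "summable g" using s by (simp add: wsummable_def g_def[abs_def])
  have "wnorm \<omega>0 (Tcoef a) {1..<K} \<le> 2 * seq_norm \<omega>0 a" for K
  proof -
    have "(wnorm \<omega>0 (Tcoef a) {1..<K})\<^sup>2 = (\<Sum>m\<in>{1..<K}. (cmod (Tcoef a m))\<^sup>2 / \<omega>0 m)"
      by (rule \<omega>0.wnorm_sq) auto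
    also have "\<dots> \<le> (\<Sum>m\<in>{1..<K}. 4 * (\<Sum>j\<in>collatz_pre m. g j))"
      unfolding g_def by (intro sum_mono Tcoef_wterm_le)
    also have "\<dots> = 4 * (\<Sum>j\<in>(\<Union>m\<in>{1..<K}. collatz_pre m). g j)"
      by (simp add: sum_distrib_left[symmetric] sum.UNION_disjoint collatz_pre_disjoint)
    also have "\<dots> \<le> 4 * suminf g" using g0 by (simp add: sum_le_suminf[OF sg])
    also have "\<dots> = (2 * seq_norm \<omega>0 a)\<^sup>2"
      using suminf_nonneg[OF sg g0] by (simp add: seq_norm_def g_def[abs_def] power_mult_distrib)
    finally show ?thesis
      by (rule power2_le_imp_le) (use suminf_nonneg[OF sg g0] in \<open>simp add: seq_norm_def g_def[abs_def]\<close>)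
  qed
  hence "wsummable \<omega>0 (Tcoef a)" "seq_norm \<omega>0 (Tcoef a) \<le> 2 * seq_norm \<omega>0 a"
    using \<omega>0.wsummable_seq_norm_le[of "Tcoef a"] by (auto simp: Tcoef_eq_sum)
  thus "inX \<omega>0 (Top f)" "normX \<omega>0 (Top f) \<le> 2 * normX \<omega>0 f"
    using Top_holomorphic[OF hol] coef_Top[OF hol]
    by (simp_all add: inX_iff normX_eq_seq_norm supp_ge3_def Tcoef_eq_sum a_def)
qed

theorem theorem3p16:
  shows "(\<forall>\<omega> :: nat \<Rightarrow> real.
            (\<forall>n\<ge>1. \<omega> n > 0) \<and>
            (\<exists>\<delta>>0. \<forall>n\<ge>1. \<omega> n \<ge> \<delta>) \<and>
            (\<forall>k\<ge>3. summable (\<lambda>n. 1 / \<omega> (k * 2 ^ n))) \<and>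
            Top_bounded \<omega>
          \<longrightarrow> freq_hypercyclic \<omega>)
         \<and> freq_hypercyclic \<omega>0"
proof -
  have general: "freq_hypercyclic \<omega>"
    if hyps: "(\<forall>n\<ge>1. \<omega> n > 0) \<and> (\<exists>\<delta>>0. \<forall>n\<ge>1. \<omega> n \<ge> \<delta>) \<and>
      (\<forall>k\<ge>3. summable (\<lambda>n. 1 / \<omega> (k * 2 ^ n))) \<and> Top_bounded \<omega>" for \<omega>
  proof -
    obtain \<delta> where "0 < \<delta>" "\<forall>n\<ge>1. \<delta> \<le> \<omega> n" using hyps by blast
    then interpret collatz_weight \<omega> \<delta> by unfold_locales (use hyps in auto)
    show ?thesis using hyps by (intro freq_hypercyclic_if_Top_bounded) simp
  qed
  moreover have "freq_hypercyclic \<omega>0"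
    using \<omega>0_pos \<omega>0_ge summable_inverse_\<omega>0_dyadic Top_bounded_\<omega>0 pi_gt_zero
    by (intro general conjI exI[of _ "1 / pi"]) auto
  ultimately show ?thesis by blast
qed

end
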